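(* Let $M$ be an $n$-dimensional path-connected manifold and let $\psi_t,\varphi_t$ be a pair of commuting complete flows on $M$ ($\psi_s\circ\varphi_t=\varphi_t\circ\psi_s$ for all $s,t$). Suppose $\psi$ has a global Poincar\'e section $\Sigma$ that is relatively closed in $M$, and let $p:\Sigma\times\mathbb{R}\to M$, $p(\sigma,\tau)=\psi_\tau(\sigma)$. Then there is, for each $t$, a lift $\Phi_t$ of $\varphi_t$ to $\Sigma\times\mathbb{R}$ (i.e. $p\circ\Phi_t=\varphi_t\circ p$) of the form \[ \Phi_t(\sigma,\tau)=(k_t(\sigma),\tau+\omega(\sigma,t)). \] In addition, $\Phi_t$ can be chosen to be a flow on $\Sigma\times\mathbb{R}$, and hence $k_{t+s}=k_t\circ k_s$ and $\omega(\sigma,t+s)=\omega(\sigma,t)+\omega(k_t(\sigma),s)$.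
   Context: A global Poincar\'e section of a complete flow $\psi$ is a relatively closed (any sequence in $\Sigma$ converging in $M$ converges in $\Sigma$), codimension-one submanifold $\Sigma\subset M$ transverse to the flow such that every orbit of the flow has both forward and backward transversal intersections with $\Sigma$. *)

theory Defs
  imports "HOL-Analysis.Analysis"
begin

definition C1_on :: "'a::euclidean_space set \<Rightarrow> ('a \<Rightarrow> 'b::euclidean_space) \<Rightarrow> bool" where
  "C1_on S f \<longleftrightarrow> (\<exists>f'. (\<forall>x\<in>S. (f has_derivative blinfun_apply (f' x)) (at x))
                        \<and> continuous_on S f')"

definition chart :: "'m::topological_space set \<Rightarrow> ('m \<Rightarrow> 'e::euclidean_space) \<Rightarrow> bool" where
  "chart U h \<longleftrightarrow> open U \<and> open (h ` U) \<and> homeomorphism U (h ` U) h (inv_into U h)"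

definition compatible_chart ::
  "('m::topological_space set \<times> ('m \<Rightarrow> 'e::euclidean_space)) set \<Rightarrow> 'm set \<Rightarrow> ('m \<Rightarrow> 'e) \<Rightarrow> bool" where
  "compatible_chart A U h \<longleftrightarrow> chart U h \<and>
     (\<forall>(V,k)\<in>A. C1_on (h ` (U \<inter> V)) (k \<circ> inv_into U h) \<and> C1_on (k ` (U \<inter> V)) (h \<circ> inv_into V k))"

definition C1_atlas :: "('m::topological_space set \<times> ('m \<Rightarrow> 'e::euclidean_space)) set \<Rightarrow> bool" where
  "C1_atlas A \<longleftrightarrow> (\<forall>(U,h)\<in>A. compatible_chart A U h) \<and> \<Union>(fst ` A) = UNIV"

text \<open>An n-dimensional (Hausdorff, second countable) C1 manifold: the space UNIV of type 'm
  with an atlas of charts into real^'n (n = CARD('n)).\<close>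
definition manifold :: "('m::topological_space set \<times> ('m \<Rightarrow> real^'n)) set \<Rightarrow> bool" where
  "manifold A \<longleftrightarrow> C1_atlas A \<and>
     (\<forall>x y::'m. x \<noteq> y \<longrightarrow> (\<exists>U V. open U \<and> open V \<and> x \<in> U \<and> y \<in> V \<and> U \<inter> V = {})) \<and>
     (\<exists>B::'m set set. countable B \<and> (\<forall>b\<in>B. open b) \<and> (\<forall>S. open S \<longrightarrow> (\<exists>B'\<subseteq>B. S = \<Union>B')))"

definition C1_flow :: "('m::topological_space set \<times> ('m \<Rightarrow> real^'n)) set \<Rightarrow> (real \<Rightarrow> 'm \<Rightarrow> 'm) \<Rightarrow> bool" where
  "C1_flow A \<psi> \<longleftrightarrow> (\<forall>x. \<psi> 0 x = x) \<and> (\<forall>s t x. \<psi> (s + t) x = \<psi> s (\<psi> t x)) \<and>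
     continuous_on UNIV (\<lambda>(t,x). \<psi> t x) \<and>
     (\<forall>(U,h)\<in>A. \<forall>(V,k)\<in>A.
        C1_on {(t, h x) | t x. x \<in> U \<and> \<psi> t x \<in> V} (\<lambda>(t,y). k (\<psi> t (inv_into U h y))))"

text \<open>Sigma is a codimension-one (embedded) C1 submanifold transverse to the flow \<psi>:
  around each point of Sigma there is a compatible slice chart in which Sigma is the
  coordinate hyperplane {y. y $ i = 0} and the flow direction has nonzero i-th component.\<close>
definition transverse_hypersurface ::
  "('m::topological_space set \<times> ('m \<Rightarrow> real^'n)) set \<Rightarrow> (real \<Rightarrow> 'm \<Rightarrow> 'm) \<Rightarrow> 'm set \<Rightarrow> bool" where
  "transverse_hypersurface A \<psi> \<Sigma> \<longleftrightarrow>
     (\<forall>\<sigma>\<in>\<Sigma>. \<exists>U h i. \<sigma> \<in> U \<and> compatible_chart A U h \<and>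
        h ` (U \<inter> \<Sigma>) = h ` U \<inter> {y. y $ i = 0} \<and>
        (\<exists>v. ((\<lambda>t. h (\<psi> t \<sigma>)) has_vector_derivative v) (at 0) \<and> v $ i \<noteq> 0))"

definition relatively_closed :: "'m::topological_space set \<Rightarrow> bool" where
  "relatively_closed \<Sigma> \<longleftrightarrow> (\<forall>s x. (\<forall>j. s j \<in> \<Sigma>) \<and> s \<longlonglongrightarrow> x \<longrightarrow> x \<in> \<Sigma>)"

definition global_poincare_section ::
  "('m::topological_space set \<times> ('m \<Rightarrow> real^'n)) set \<Rightarrow> (real \<Rightarrow> 'm \<Rightarrow> 'm) \<Rightarrow> 'm set \<Rightarrow> bool" where
  "global_poincare_section A \<psi> \<Sigma> \<longleftrightarrow> relatively_closed \<Sigma> \<and> transverse_hypersurface A \<psi> \<Sigma> \<and>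
     (\<forall>x. (\<exists>t>0. \<psi> t x \<in> \<Sigma>) \<and> (\<exists>t<0. \<psi> t x \<in> \<Sigma>))"

end

theory Submission
  imports Defs
begin

lemma nonneg_continuation_induct:
  fixes P :: "real \<Rightarrow> bool"
  assumes start: "P 0"
    and down: "\<And>s t. P t \<Longrightarrow> 0 \<le> s \<Longrightarrow> s \<le> t \<Longrightarrow> P s"
    and step: "\<And>s. 0 \<le> s \<Longrightarrow> \<exists>\<epsilon>>0. \<forall>t. 0 \<le> t \<longrightarrow> s - \<epsilon> < t \<longrightarrow> t \<le> s \<longrightarrow> P t \<longrightarrow> P (s + \<epsilon>)"
    and "0 \<le> s"
  shows "P s"
proof (rule ccontr)
  assume "\<not> P s"
  define E where "E = {t. 0 \<le> t \<and> P t}"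
  have "0 \<in> E" using start by (simp add: E_def)
  have "t \<le> s" if "t \<in> E" for t
    using that down[of t s] \<open>\<not> P s\<close> \<open>0 \<le> s\<close> by (force simp: E_def)
  then have bdd: "bdd_above E" by (rule bdd_aboveI)
  define s0 where "s0 = Sup E"
  have "0 \<le> s0" unfolding s0_def using \<open>0 \<in> E\<close> bdd by (rule cSup_upper)
  then obtain \<epsilon> where \<epsilon>: "\<epsilon> > 0" "\<forall>t. 0 \<le> t \<longrightarrow> s0 - \<epsilon> < t \<longrightarrow> t \<le> s0 \<longrightarrow> P t \<longrightarrow> P (s0 + \<epsilon>)"
    using step by blast
  obtain t where t: "t \<in> E" "s0 - \<epsilon> < t"
    using less_cSupE[of "s0 - \<epsilon>" E] \<open>0 \<in> E\<close> \<epsilon>(1) by (auto simp: s0_def)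
  have "t \<le> s0" unfolding s0_def using t(1) bdd by (rule cSup_upper)
  then have "s0 + \<epsilon> \<in> E" using \<epsilon> t \<open>0 \<le> s0\<close> by (auto simp: E_def)
  then have "s0 + \<epsilon> \<le> s0" unfolding s0_def using bdd by (rule cSup_upper)
  then show False using \<epsilon>(1) by simp
qed

lemma continuous_on_locally:
  assumes "\<And>x. x \<in> D \<Longrightarrow> \<exists>V. open V \<and> x \<in> V \<and> continuous_on (D \<inter> V) f"
  shows "continuous_on D f"
  unfolding continuous_on_def
proof
  fix x assume "x \<in> D"
  then obtain V where V: "open V" "x \<in> V" "continuous_on (D \<inter> V) f" using assms by blast
  have "(f \<longlongrightarrow> f x) (at x within D \<inter> V)"
    using V(3) \<open>x \<in> D\<close> V(2) unfolding continuous_on_def by blast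
  moreover have "at x within D = at x within D \<inter> V"
    by (rule at_within_nhd[OF V(2,1)]) auto
  ultimately show "(f \<longlongrightarrow> f x) (at x within D)" by simp
qed

lemma sequentially_closed_imp_closed:
  fixes S :: "'a::topological_space set" and B :: "'a set set"
  assumes "countable B" and B_open: "\<And>b. b \<in> B \<Longrightarrow> open b"
    and B_base: "\<And>U. open U \<Longrightarrow> \<exists>B'\<subseteq>B. U = \<Union>B'"
    and seq: "\<And>s x. (\<And>j. s j \<in> S) \<Longrightarrow> s \<longlonglongrightarrow> x \<Longrightarrow> x \<in> S"
  shows "closed S"
  unfolding closed_def
proof (subst open_subopen, intro ballI)
  fix x assume "x \<in> - S"
  show "\<exists>T. open T \<and> x \<in> T \<and> T \<subseteq> - S"
  proof (rule ccontr)
    assume meets: "\<not> ?thesis"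
    have base_at: "\<exists>b\<in>{b\<in>B. x \<in> b}. b \<subseteq> U" if "open U" "x \<in> U" for U
      using B_base[OF that(1)] that(2) by blast
    have "\<exists>A::nat \<Rightarrow> 'a set. (\<forall>i. x \<in> A i \<and> open (A i)) \<and> (\<forall>U. open U \<and> x \<in> U \<longrightarrow> (\<exists>i. A i \<subseteq> U))"
      by (rule first_countableI[of "{b\<in>B. x \<in> b}"]) (use \<open>countable B\<close> B_open base_at in auto)
    then obtain A :: "nat \<Rightarrow> 'a set" where A: "\<And>i. x \<in> A i \<and> open (A i)"
      "\<And>U. open U \<Longrightarrow> x \<in> U \<Longrightarrow> \<exists>i. A i \<subseteq> U"
      by metis
    define F where "F n = (\<Inter>i\<le>n. A i)" for n
    have "open (F n)" "x \<in> F n" for n using A(1) by (auto simp: F_def)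
    then have "\<exists>y. y \<in> F n \<and> y \<in> S" for n using meets by blast
    then obtain s where s: "\<And>n. s n \<in> F n" "\<And>n. s n \<in> S" by metis
    have "s \<longlonglongrightarrow> x"
    proof (rule topological_tendstoI)
      fix U assume "open U" "x \<in> U"
      then obtain i where "A i \<subseteq> U" using A(2) by blast
      then have "s n \<in> U" if "i \<le> n" for n using s(1)[of n] that by (auto simp: F_def)
      then show "\<forall>\<^sub>F n in sequentially. s n \<in> U" by (auto simp: eventually_sequentially)
    qed
    then show False using seq[of s x] s(2) \<open>x \<in> - S\<close> by blast
  qed
qed

lemma continuous_on_Times_interval_glue:
  fixes f :: "'a::topological_space \<times> real \<Rightarrow> 'b::topological_space"
  assumes "continuous_on (X \<times> {a..b}) f" "continuous_on (X \<times> {b..c}) f"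
  shows "continuous_on (X \<times> {a..c}) f"
proof -
  have "continuous_on {p \<in> X \<times> {a..c}. snd p \<le> b} f"
    by (rule continuous_on_subset[OF assms(1)]) (auto simp: mem_Times_iff)
  moreover have "continuous_on {p \<in> X \<times> {a..c}. b \<le> snd p} f"
    by (rule continuous_on_subset[OF assms(2)]) (auto simp: mem_Times_iff)
  ultimately have "continuous_on (X \<times> {a..c}) (\<lambda>p. if snd p \<le> b then f p else f p)"
    by (rule continuous_on_cases_le[OF _ _ continuous_on_snd[OF continuous_on_id]]) simp
  then show ?thesis by simp
qed

locale continuous_flow =
  fixes \<psi> :: "real \<Rightarrow> 'm::topological_space \<Rightarrow> 'm"
  assumes flow_zero [simp]: "\<psi> 0 x = x"
    and flow_add: "\<psi> (s + t) x = \<psi> s (\<psi> t x)"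
    and flow_continuous: "continuous_on UNIV (\<lambda>(t, x). \<psi> t x)"
begin

lemma flow_flow [simp]: "\<psi> s (\<psi> t x) = \<psi> (s + t) x"
  by (simp add: flow_add)

lemma continuous_on_flow [continuous_intros]:
  assumes "continuous_on D a" "continuous_on D b"
  shows "continuous_on D (\<lambda>z. \<psi> (a z) (b z))"
  using continuous_on_compose2[OF flow_continuous continuous_on_Pair[OF assms]] by simp

lemma reverse_continuous_flow: "continuous_flow (\<lambda>t. \<psi> (- t))"
proof
  show "continuous_on UNIV (\<lambda>(t, x). \<psi> (- t) x)"
    by (simp add: case_prod_unfold) (intro continuous_intros)
qed (simp_all add: add.commute)

end

definition crossing_time :: "(real \<Rightarrow> 'm::topological_space \<Rightarrow> 'm) \<Rightarrow> 'm set \<Rightarrow> 'm set \<Rightarrow> real \<Rightarrow> ('m \<Rightarrow> real) \<Rightarrow> bool" where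
  "crossing_time \<psi> S W \<delta> \<tau> \<longleftrightarrow> 0 < \<delta> \<and> continuous_on W \<tau> \<and>
     (\<forall>x\<in>W. \<bar>\<tau> x\<bar> < \<delta> \<and> \<psi> (\<tau> x) x \<in> S \<and> (\<forall>t. \<bar>t\<bar> < \<delta> \<longrightarrow> \<psi> t x \<in> S \<longrightarrow> t = \<tau> x))"

lemma crossing_time_reverse:
  assumes "crossing_time \<psi> S W \<delta> \<tau>"
  shows "crossing_time (\<lambda>t. \<psi> (- t)) S W \<delta> (\<lambda>x. - \<tau> x)"
  unfolding crossing_time_def
proof (intro conjI ballI allI impI)
  show "0 < \<delta>" "continuous_on W (\<lambda>x. - \<tau> x)"
    using assms by (auto simp: crossing_time_def intro: continuous_on_minus)
  fix x assume "x \<in> W"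
  then have x: "\<bar>\<tau> x\<bar> < \<delta>" "\<psi> (\<tau> x) x \<in> S" "\<forall>t. \<bar>t\<bar> < \<delta> \<longrightarrow> \<psi> t x \<in> S \<longrightarrow> t = \<tau> x"
    using assms unfolding crossing_time_def by blast+
  show "\<bar>- \<tau> x\<bar> < \<delta>" "\<psi> (- (- \<tau> x)) x \<in> S" using x(1,2) by simp_all
  fix t assume "\<bar>t\<bar> < \<delta>" "\<psi> (- t) x \<in> S"
  then show "t = - \<tau> x" using x(3)[rule_format, of "- t"] by simp
qed

text \<open>In the notation of the paper, \<open>z \<mapsto> (\<psi> (- w z) (Q z), w z)\<close> is a lift of \<open>Q\<close> through
  \<open>p (\<sigma>, \<tau>) = \<psi> \<tau> \<sigma>\<close>.\<close>
definition time_lift :: "(real \<Rightarrow> 'm \<Rightarrow> 'm) \<Rightarrow> 'm set \<Rightarrow> 'x::topological_space set \<Rightarrow> ('x \<Rightarrow> 'm) \<Rightarrow> ('x \<Rightarrow> real) \<Rightarrow> bool" where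
  "time_lift \<psi> S D Q w \<longleftrightarrow> continuous_on D w \<and> (\<forall>z\<in>D. \<psi> (- w z) (Q z) \<in> S)"

lemma time_lift_subset: "time_lift \<psi> S D Q w \<Longrightarrow> D' \<subseteq> D \<Longrightarrow> time_lift \<psi> S D' Q w"
  unfolding time_lift_def by (auto intro: continuous_on_subset)

lemma time_lift_compose:
  assumes "time_lift \<psi> S D Q w" "continuous_on E f" "f ` E \<subseteq> D"
  shows "time_lift \<psi> S E (\<lambda>z. Q (f z)) (\<lambda>z. w (f z))"
  unfolding time_lift_def
proof
  show "continuous_on E (\<lambda>z. w (f z))"
    using assms(1) unfolding time_lift_def by (blast intro: continuous_on_compose2[OF _ assms(2,3)])
  show "\<forall>z\<in>E. \<psi> (- w (f z)) (Q (f z)) \<in> S" using assms(1,3) unfolding time_lift_def by blast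
qed

lemma time_lift_glue:
  fixes Q :: "real \<Rightarrow> 'm"
  assumes w1: "time_lift \<psi> S {a..b} Q w1" and w2: "time_lift \<psi> S {b..c} Q w2" and "w1 b = w2 b"
  shows "time_lift \<psi> S {a..c} Q (\<lambda>t. if t \<le> b then w1 t else w2 t)"
  unfolding time_lift_def
proof
  have "continuous_on {a..b} w1" "continuous_on {b..c} w2"
    using w1 w2 by (simp_all add: time_lift_def)
  then show "continuous_on {a..c} (\<lambda>t. if t \<le> b then w1 t else w2 t)"
    using \<open>w1 b = w2 b\<close>
    by (intro continuous_on_cases_le[where h = "\<lambda>t. t", OF _ _ continuous_on_id])
       (auto elim!: continuous_on_subset)
  show "\<forall>t\<in>{a..c}. \<psi> (- (if t \<le> b then w1 t else w2 t)) (Q t) \<in> S"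
    using w1 w2 unfolding time_lift_def by auto
qed

locale flow_section = continuous_flow \<psi> for \<psi> :: "real \<Rightarrow> 'm::topological_space \<Rightarrow> 'm" +
  fixes S :: "'m set"
  assumes closed_section: "closed S"
    and local_crossing_time: "\<sigma> \<in> S \<Longrightarrow> \<exists>W \<delta> \<tau>. open W \<and> \<sigma> \<in> W \<and> crossing_time \<psi> S W \<delta> \<tau>"
    and returns_forward: "\<exists>t>0. \<psi> t x \<in> S"
    and returns_backward: "\<exists>t<0. \<psi> t x \<in> S"
begin

lemma crossing_time_on_section:
  assumes "crossing_time \<psi> S W \<delta> \<tau>" "x \<in> W" "x \<in> S"
  shows "\<tau> x = 0"
  using assms unfolding crossing_time_def by (metis abs_zero flow_zero)

lemma local_time_lift:
  assumes Q: "continuous_on D Q" and "z0 \<in> D" and hit: "\<psi> (- w0) (Q z0) \<in> S"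
  obtains N w where "open N" "z0 \<in> N" "time_lift \<psi> S (D \<inter> N) Q w" "w z0 = w0"
proof -
  define P where "P z = \<psi> (- w0) (Q z)" for z
  obtain W \<delta> \<tau> where W: "open W" "P z0 \<in> W" and \<tau>: "crossing_time \<psi> S W \<delta> \<tau>"
    using local_crossing_time[OF hit] unfolding P_def by blast
  have "continuous_on D P" unfolding P_def by (intro continuous_intros Q)
  then obtain N where N: "open N" "N \<inter> D = P -` W \<inter> D"
    using continuous_on_open_invariant W(1) by metis
  show thesis
  proof
    show "open N" by fact
    show "z0 \<in> N" using N W(2) \<open>z0 \<in> D\<close> by auto
    have "continuous_on (D \<inter> N) P" using \<open>continuous_on D P\<close> by (rule continuous_on_subset) auto
    moreover have "P ` (D \<inter> N) \<subseteq> W" using N by auto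
    ultimately have "continuous_on (D \<inter> N) (\<lambda>z. \<tau> (P z))"
      using \<tau> unfolding crossing_time_def by (blast intro: continuous_on_compose2)
    moreover have "\<psi> (- (w0 - \<tau> (P z))) (Q z) \<in> S" if "z \<in> D \<inter> N" for z
    proof -
      have "P z \<in> W" using that N by auto
      then have "\<psi> (\<tau> (P z)) (P z) \<in> S" using \<tau> unfolding crossing_time_def by blast
      then show ?thesis by (simp add: P_def)
    qed
    ultimately show "time_lift \<psi> S (D \<inter> N) Q (\<lambda>z. w0 - \<tau> (P z))"
      unfolding time_lift_def by (auto intro: continuous_intros)
    show "w0 - \<tau> (P z0) = w0"
      using crossing_time_on_section[OF \<tau> W(2)] hit by (simp add: P_def)
  qed
qed

lemma time_lifts_agree_locally:
  assumes Q: "continuous_on D Q" and w1: "time_lift \<psi> S D Q w1" and w2: "time_lift \<psi> S D Q w2"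
    and "z0 \<in> D" "w1 z0 = w2 z0"
  obtains N where "open N" "z0 \<in> N" "\<And>z. z \<in> D \<inter> N \<Longrightarrow> w1 z = w2 z"
proof -
  define P where "P z = \<psi> (- w1 z) (Q z)" for z
  have P_S: "P z \<in> S" if "z \<in> D" for z using w1 that unfolding time_lift_def P_def by blast
  obtain W \<delta> \<tau> where W: "open W" "P z0 \<in> W" and \<tau>: "crossing_time \<psi> S W \<delta> \<tau>"
    using local_crossing_time[OF P_S[OF \<open>z0 \<in> D\<close>]] by blast
  have "continuous_on D w1" "continuous_on D w2" using w1 w2 unfolding time_lift_def by blast+
  then have "continuous_on D P" unfolding P_def by (intro continuous_intros Q)
  then obtain N1 where N1: "open N1" "N1 \<inter> D = P -` W \<inter> D"
    using continuous_on_open_invariant W(1) by metis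
  have "continuous_on D (\<lambda>z. w2 z - w1 z)"
    by (intro continuous_intros) fact+
  then obtain N2 where N2: "open N2" "N2 \<inter> D = (\<lambda>z. w2 z - w1 z) -` {-\<delta><..<\<delta>} \<inter> D"
    unfolding continuous_on_open_invariant by (meson open_greaterThanLessThan)
  show thesis
  proof
    show "open (N1 \<inter> N2)" using N1 N2 by auto
    show "z0 \<in> N1 \<inter> N2" using N1 N2 W(2) \<tau> \<open>z0 \<in> D\<close> \<open>w1 z0 = w2 z0\<close> by (auto simp: crossing_time_def)
    fix z assume z: "z \<in> D \<inter> (N1 \<inter> N2)"
    then have "P z \<in> W" "w2 z - w1 z \<in> {-\<delta><..<\<delta>}" using N1 N2 by blast+
    then have small: "\<bar>w1 z - w2 z\<bar> < \<delta>" by auto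
    have "\<psi> (- w2 z) (Q z) \<in> S" using w2 z unfolding time_lift_def by blast
    then have hit: "\<psi> (w1 z - w2 z) (P z) \<in> S" by (simp add: P_def)
    have "\<forall>t. \<bar>t\<bar> < \<delta> \<longrightarrow> \<psi> t (P z) \<in> S \<longrightarrow> t = \<tau> (P z)"
      using \<tau> \<open>P z \<in> W\<close> unfolding crossing_time_def by blast
    then have "w1 z - w2 z = \<tau> (P z)" using small hit by simp
    also have "\<dots> = 0" using z by (intro crossing_time_on_section[OF \<tau> \<open>P z \<in> W\<close> P_S]) blast
    finally have "w1 z - w2 z = 0" .
    then show "w1 z = w2 z" by simp
  qed
qed

lemma time_lift_unique:
  assumes "connected D" "continuous_on D Q" "time_lift \<psi> S D Q w1" "time_lift \<psi> S D Q w2"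
    and "z0 \<in> D" "w1 z0 = w2 z0" "z \<in> D"
  shows "w1 z = w2 z"
proof -
  let ?E = "{z\<in>D. w1 z - w2 z = 0}"
  have "continuous_on D w1" "continuous_on D w2" using assms(3,4) unfolding time_lift_def by blast+
  then have "closedin (top_of_set D) ?E"
    by (intro continuous_closedin_preimage_constant continuous_on_diff)
  moreover have "openin (top_of_set D) ?E"
  proof (subst openin_subopen, intro ballI)
    fix z assume "z \<in> ?E"
    then obtain N where "open N" "z \<in> N" "\<And>z. z \<in> D \<inter> N \<Longrightarrow> w1 z = w2 z"
      using time_lifts_agree_locally[OF assms(2-4)] by auto
    then show "\<exists>T. openin (top_of_set D) T \<and> z \<in> T \<and> T \<subseteq> ?E"
      using \<open>z \<in> ?E\<close> by (intro exI[of _ "D \<inter> N"]) (auto simp: openin_open_Int)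
  qed
  ultimately have "?E = {} \<or> ?E = D"
    using connected_clopen[THEN iffD1, OF assms(1), THEN spec[of _ ?E]] by blast
  then show ?thesis using assms(5-7) by auto
qed


lemma closed_hitting_times: "closed {t. \<psi> t y \<in> S}"
proof -
  have "continuous_on UNIV (\<lambda>t. \<psi> t y)" by (intro continuous_intros)
  then show ?thesis using closed_vimage[OF closed_section] by (simp add: vimage_def)
qed

definition return_time :: "'m \<Rightarrow> real" where
  "return_time y = Inf {t. 0 < t \<and> \<psi> t y \<in> S}"

lemma return_time:
  assumes "y \<in> S"
  shows return_time_pos: "0 < return_time y"
    and flow_return_time_mem: "\<psi> (return_time y) y \<in> S"
    and flow_before_return_time: "\<And>t. 0 < t \<Longrightarrow> t < return_time y \<Longrightarrow> \<psi> t y \<notin> S"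
proof -
  obtain W \<delta> \<tau> where "open W" "y \<in> W" and \<tau>: "crossing_time \<psi> S W \<delta> \<tau>"
    using local_crossing_time[OF assms] by blast
  have "\<tau> y = 0" using \<tau> \<open>y \<in> W\<close> assms by (rule crossing_time_on_section)
  have no_early_hit: "\<delta> \<le> t" if "0 < t" "\<psi> t y \<in> S" for t
  proof (rule ccontr)
    assume "\<not> \<delta> \<le> t"
    then have "t = \<tau> y" using \<tau> \<open>y \<in> W\<close> that unfolding crossing_time_def by auto
    then show False using \<open>\<tau> y = 0\<close> that(1) by simp
  qed
  let ?H = "{t. 0 < t \<and> \<psi> t y \<in> S}"
  have H: "?H = {\<delta>..} \<inter> {t. \<psi> t y \<in> S}"
    using no_early_hit \<tau> by (auto simp: crossing_time_def)
  have bdd: "bdd_below ?H" by (rule bdd_belowI[of _ 0]) auto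
  have "?H \<noteq> {}" using returns_forward[of y] by auto
  moreover have "closed ?H" unfolding H by (intro closed_Int closed_atLeast closed_hitting_times)
  ultimately have "return_time y \<in> ?H"
    unfolding return_time_def using bdd by (intro closed_contains_Inf)
  then show "0 < return_time y" "\<psi> (return_time y) y \<in> S" by auto
  show "\<psi> t y \<notin> S" if "0 < t" "t < return_time y" for t
  proof
    assume "\<psi> t y \<in> S"
    then have "return_time y \<le> t"
      unfolding return_time_def using \<open>0 < t\<close> by (intro cInf_lower[OF _ bdd]) simp
    then show False using that(2) by simp
  qed
qed

lemma return_time_le: "y \<in> S \<Longrightarrow> 0 < t \<Longrightarrow> \<psi> t y \<in> S \<Longrightarrow> return_time y \<le> t"
  by (metis flow_before_return_time not_le)

lemma eventually_return_time_less:
  assumes y0: "y0 \<in> S" and "return_time y0 < b"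
  shows "eventually (\<lambda>y. return_time y < b) (at y0 within S)"
proof -
  define r0 where "r0 = return_time y0"
  have "0 < r0" "\<psi> r0 y0 \<in> S" using return_time[OF y0] by (simp_all add: r0_def)
  then obtain W \<delta> \<tau> where W: "open W" "\<psi> r0 y0 \<in> W" and \<tau>: "crossing_time \<psi> S W \<delta> \<tau>"
    using local_crossing_time by blast
  define e where "e = min (b - r0) r0"
  have "0 < e" using \<open>0 < r0\<close> assms(2) by (simp add: e_def r0_def)
  have "continuous_on W \<tau>" using \<tau> by (simp add: crossing_time_def)
  have "\<tau> (\<psi> r0 y0) = 0" using crossing_time_on_section[OF \<tau> W(2) \<open>\<psi> r0 y0 \<in> S\<close>] .
  then have "\<tau> (\<psi> r0 y0) \<in> {-e<..<e}" using \<open>0 < e\<close> by simp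
  then obtain B where B: "open B" "\<psi> r0 y0 \<in> B" "\<forall>x\<in>W. x \<in> B \<longrightarrow> \<tau> x \<in> {-e<..<e}"
    using continuous_on_topological[THEN iffD1, rule_format, OF \<open>continuous_on W \<tau>\<close> W(2)
        open_greaterThanLessThan[of "-e" e]] by auto
  show ?thesis
    unfolding eventually_at_topological
  proof (intro exI[of _ "\<psi> r0 -` (W \<inter> B)"] conjI ballI impI)
    have "continuous_on UNIV (\<lambda>x. \<psi> r0 x)" by (intro continuous_intros)
    then show "open (\<psi> r0 -` (W \<inter> B))" by (rule open_vimage[OF open_Int[OF W(1) B(1)]])
    show "y0 \<in> \<psi> r0 -` (W \<inter> B)" using W(2) B(2) by blast
    fix y assume "y \<in> \<psi> r0 -` (W \<inter> B)" "y \<in> S"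
    then have "\<psi> r0 y \<in> W" "\<psi> r0 y \<in> B" by auto
    then have "\<tau> (\<psi> r0 y) \<in> {-e<..<e}" "\<psi> (\<tau> (\<psi> r0 y)) (\<psi> r0 y) \<in> S"
      using B(3) \<tau> unfolding crossing_time_def by blast+
    then have "\<bar>\<tau> (\<psi> r0 y)\<bar> < e" "\<psi> (\<tau> (\<psi> r0 y) + r0) y \<in> S" by auto
    then have "return_time y \<le> \<tau> (\<psi> r0 y) + r0"
      using \<open>y \<in> S\<close> by (intro return_time_le) (auto simp: e_def)
    then show "return_time y < b" using \<open>\<bar>\<tau> (\<psi> r0 y)\<bar> < e\<close> by (auto simp: e_def r0_def abs_less_iff)
  qed
qed


lemma eventually_return_time_greater:
  assumes y0: "y0 \<in> S" and "a < return_time y0"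
  shows "eventually (\<lambda>y. a < return_time y) (at y0 within S)"
proof -
  obtain W \<delta> \<tau> where W: "open W" "y0 \<in> W" and \<tau>: "crossing_time \<psi> S W \<delta> \<tau>"
    using local_crossing_time[OF y0] by blast
  define Miss where "Miss = (\<lambda>p. \<psi> (snd p) (fst p)) -` (- S)"
  have "continuous_on UNIV (\<lambda>p::'m \<times> real. \<psi> (snd p) (fst p))" by (intro continuous_intros)
  then have "open Miss" unfolding Miss_def by (rule open_vimage[OF open_Compl[OF closed_section]])
  have miss: "{y0} \<times> {\<delta>..a} \<subseteq> Miss"
  proof
    fix p assume p: "p \<in> {y0} \<times> {\<delta>..a}"
    have "0 < \<delta>" using \<tau> by (simp add: crossing_time_def)
    then have "0 < snd p" "snd p < return_time y0" using p \<open>a < return_time y0\<close> by auto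
    then have "\<psi> (snd p) y0 \<notin> S" by (rule flow_before_return_time[OF y0])
    then show "p \<in> Miss" using p by (auto simp: Miss_def)
  qed
  obtain X where X: "y0 \<in> X" "open X" "X \<times> {\<delta>..a} \<subseteq> Miss"
    using Elementary_Topology.tube_lemma[OF compact_Icc \<open>open Miss\<close> miss] by blast
  show ?thesis
    unfolding eventually_at_topological
  proof (intro exI[of _ "W \<inter> X"] conjI ballI impI)
    show "open (W \<inter> X)" "y0 \<in> W \<inter> X" using W X by auto
    fix y assume y: "y \<in> W \<inter> X" "y \<in> S"
    show "a < return_time y"
    proof (rule ccontr)
      assume "\<not> a < return_time y"
      have r: "0 < return_time y" "\<psi> (return_time y) y \<in> S" using return_time[OF y(2)] by auto
      have "\<tau> y = 0" using crossing_time_on_section[OF \<tau>] y by blast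
      have unique: "\<forall>t. \<bar>t\<bar> < \<delta> \<longrightarrow> \<psi> t y \<in> S \<longrightarrow> t = \<tau> y"
        using \<tau> y(1) unfolding crossing_time_def by blast
      have "\<delta> \<le> return_time y"
      proof (rule ccontr)
        assume "\<not> \<delta> \<le> return_time y"
        then have "return_time y = \<tau> y" using unique[rule_format, of "return_time y"] r by simp
        then show False using \<open>\<tau> y = 0\<close> r(1) by simp
      qed
      then have "(y, return_time y) \<in> Miss" using X(3) y(1) \<open>\<not> a < return_time y\<close> by auto
      then show False using r(2) by (simp add: Miss_def)
    qed
  qed
qed

lemma continuous_on_return_time: "continuous_on S return_time"
  unfolding continuous_on_def
proof
  fix y assume "y \<in> S"
  show "(return_time \<longlongrightarrow> return_time y) (at y within S)"
    by (intro order_tendstoI eventually_return_time_greater eventually_return_time_less \<open>y \<in> S\<close>)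
qed

primrec return_time_iter :: "nat \<Rightarrow> 'm \<Rightarrow> real" where
  "return_time_iter 0 y = 0"
| "return_time_iter (Suc n) y = return_time_iter n y + return_time (\<psi> (return_time_iter n y) y)"

lemma flow_return_time_iter_mem: "y \<in> S \<Longrightarrow> \<psi> (return_time_iter n y) y \<in> S"
proof (induction n)
  case (Suc n)
  show ?case using flow_return_time_mem[OF Suc.IH[OF Suc.prems]] by (simp add: add.commute)
qed simp

lemma continuous_on_return_time_iter: "continuous_on S (return_time_iter n)"
proof (induction n)
  case (Suc n)
  have "continuous_on S (\<lambda>y. \<psi> (return_time_iter n y) y)" by (intro continuous_intros Suc.IH)
  then have "continuous_on S (\<lambda>y. return_time (\<psi> (return_time_iter n y) y))"
    by (rule continuous_on_compose2[OF continuous_on_return_time]) (auto intro: flow_return_time_iter_mem)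
  then show ?case using Suc.IH by (simp add: continuous_on_add)
qed simp

lemma return_time_iter_less_Suc: "y \<in> S \<Longrightarrow> return_time_iter n y < return_time_iter (Suc n) y"
  using return_time_pos[OF flow_return_time_iter_mem] by simp

lemma return_time_iter_unbounded:
  assumes y: "y \<in> S"
  shows "\<exists>n. M < return_time_iter n y"
proof (rule ccontr)
  assume "\<nexists>n. M < return_time_iter n y"
  then have "\<forall>n. return_time_iter n y \<le> M" by (simp add: not_less)
  moreover have "incseq (\<lambda>n. return_time_iter n y)"
    by (intro incseq_SucI less_imp_le return_time_iter_less_Suc[OF y])
  ultimately obtain L where L: "(\<lambda>n. return_time_iter n y) \<longlonglongrightarrow> L"
    using incseq_convergent by metis
  have "continuous_on UNIV (\<lambda>t. \<psi> t y)" by (intro continuous_intros)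
  then have hits: "(\<lambda>n. \<psi> (return_time_iter n y) y) \<longlonglongrightarrow> \<psi> L y"
    using continuous_on_tendsto_compose[OF _ L, of UNIV] by simp
  then have "\<psi> L y \<in> S"
    by (rule Lim_in_closed_set[OF closed_section, rotated 2]) (simp_all add: flow_return_time_iter_mem[OF y])
  then obtain W \<delta> \<tau> where W: "open W" "\<psi> L y \<in> W" and \<tau>: "crossing_time \<psi> S W \<delta> \<tau>"
    using local_crossing_time by blast
  have "eventually (\<lambda>n. \<psi> (return_time_iter n y) y \<in> W) sequentially"
    using hits W by (rule topological_tendstoD)
  moreover have "eventually (\<lambda>n. dist (return_time_iter n y) L < \<delta>/2) sequentially"
    using L \<tau> by (intro tendstoD) (auto simp: crossing_time_def)
  ultimately have "eventually (\<lambda>n. \<psi> (return_time_iter n y) y \<in> W \<and>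
      dist (return_time_iter n y) L < \<delta>/2) sequentially"
    by (rule eventually_conj)
  then obtain N where N: "\<And>n. N \<le> n \<Longrightarrow> \<psi> (return_time_iter n y) y \<in> W \<and>
      dist (return_time_iter n y) L < \<delta>/2"
    unfolding eventually_sequentially by blast
  define x where "x = \<psi> (return_time_iter N y) y"
  define d where "d = return_time_iter (Suc N) y - return_time_iter N y"
  have "x \<in> W" "x \<in> S" using N[of N] flow_return_time_iter_mem[OF y] by (auto simp: x_def)
  have "dist (return_time_iter N y) L < \<delta>/2" "dist (return_time_iter (Suc N) y) L < \<delta>/2"
    using N[of N] N[of "Suc N"] by simp_all
  then have "\<bar>d\<bar> < \<delta>" unfolding d_def dist_real_def abs_less_iff by linarith
  moreover have "\<psi> d x \<in> S"
    using flow_return_time_iter_mem[OF y, of "Suc N"] by (simp add: x_def d_def add.commute)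
  moreover have "\<forall>t. \<bar>t\<bar> < \<delta> \<longrightarrow> \<psi> t x \<in> S \<longrightarrow> t = \<tau> x"
    using \<tau> \<open>x \<in> W\<close> unfolding crossing_time_def by blast
  ultimately have "d = \<tau> x" by blast
  also have "\<tau> x = 0" using crossing_time_on_section[OF \<tau> \<open>x \<in> W\<close> \<open>x \<in> S\<close>] .
  finally show False using return_time_iter_less_Suc[OF y, of N] by (simp add: d_def)
qed

lemma hitting_time_eq_return_time_iter:
  assumes y: "y \<in> S" and "0 \<le> d" and hit: "\<psi> d y \<in> S"
  shows "\<exists>n. d = return_time_iter n y"
proof -
  define m where "m = (LEAST m. d < return_time_iter m y)"
  have m: "d < return_time_iter m y"
    unfolding m_def using return_time_iter_unbounded[OF y] by (rule LeastI_ex)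
  then obtain n where n: "m = Suc n" using \<open>0 \<le> d\<close> by (cases m) auto
  then have "\<not> d < return_time_iter n y"
    using not_less_Least[of n "\<lambda>m. d < return_time_iter m y"] by (simp add: m_def)
  then have "return_time_iter n y \<le> d" by simp
  show ?thesis
  proof (cases "return_time_iter n y = d")
    case False
    define z where "z = \<psi> (return_time_iter n y) y"
    have "z \<in> S" using flow_return_time_iter_mem[OF y] by (simp add: z_def)
    moreover have "0 < d - return_time_iter n y" using False \<open>return_time_iter n y \<le> d\<close> by simp
    moreover have "d - return_time_iter n y < return_time z" using m n by (simp add: z_def)
    ultimately have "\<psi> (d - return_time_iter n y) z \<notin> S" by (rule flow_before_return_time)
    moreover have "\<psi> (d - return_time_iter n y) z \<in> S" using hit by (simp add: z_def)
    ultimately show ?thesis by contradiction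
  qed (metis)
qed

lemma reverse_flow_section: "flow_section (\<lambda>t. \<psi> (- t)) S"
proof (intro flow_section.intro reverse_continuous_flow flow_section_axioms.intro closed_section)
  show "\<exists>W \<delta> \<tau>. open W \<and> \<sigma> \<in> W \<and> crossing_time (\<lambda>t. \<psi> (- t)) S W \<delta> \<tau>" if "\<sigma> \<in> S" for \<sigma>
    using local_crossing_time[OF that] crossing_time_reverse by blast
  show "\<exists>t>0. \<psi> (- t) x \<in> S" for x
    using returns_backward[of x] by (metis neg_0_less_iff_less minus_minus)
  show "\<exists>t<0. \<psi> (- t) x \<in> S" for x
    using returns_forward[of x] by (metis neg_less_0_iff_less minus_minus)
qed

text \<open>Every hitting time is an iterated forward or backward return time, and these depend
  continuously on the point of the section.\<close>
lemma hitting_time_extends_continuously: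
  assumes y: "y \<in> S" and hit: "\<psi> d y \<in> S"
  obtains c where "continuous_on S c" "c y = d" "\<And>z. z \<in> S \<Longrightarrow> \<psi> (c z) z \<in> S"
proof (cases "0 \<le> d")
  case True
  then obtain n where "d = return_time_iter n y"
    using hitting_time_eq_return_time_iter[OF y _ hit] by blast
  then show ?thesis
    using that continuous_on_return_time_iter flow_return_time_iter_mem by blast
next
  case False
  interpret R: flow_section "\<lambda>t. \<psi> (- t)" S by (rule reverse_flow_section)
  have "\<psi> (- (- d)) y \<in> S" using hit by simp
  then obtain n where n: "- d = R.return_time_iter n y"
    using R.hitting_time_eq_return_time_iter[OF y] False by force
  show ?thesis
  proof (rule that)
    show "continuous_on S (\<lambda>z. - R.return_time_iter n z)"
      by (intro continuous_on_minus R.continuous_on_return_time_iter)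
    show "- R.return_time_iter n y = d" using n by simp
    show "\<psi> (- R.return_time_iter n z) z \<in> S" if "z \<in> S" for z
      using R.flow_return_time_iter_mem[OF that] .
  qed
qed

end

locale commuting_flows = flow_section \<psi> S + phi: continuous_flow \<phi>
  for \<psi> :: "real \<Rightarrow> 'm::topological_space \<Rightarrow> 'm" and S and \<phi> :: "real \<Rightarrow> 'm \<Rightarrow> 'm" +
  assumes flows_commute: "\<psi> s (\<phi> t x) = \<phi> t (\<psi> s x)"
begin

lemma reverse_commuting_flows: "commuting_flows \<psi> S (\<lambda>t. \<phi> (- t))"
  by (intro commuting_flows.intro flow_section_axioms phi.reverse_continuous_flow
      commuting_flows_axioms.intro flows_commute)

definition orbit_liftable :: "'m \<Rightarrow> real \<Rightarrow> bool" where
  "orbit_liftable \<sigma> s \<longleftrightarrow> (\<exists>w. time_lift \<psi> S {0..s} (\<lambda>t. \<phi> t \<sigma>) w \<and> w 0 = 0)"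

lemma orbit_liftable_extends:
  assumes "\<sigma> \<in> S"
  shows "\<exists>\<epsilon>>0. \<forall>t. 0 \<le> t \<longrightarrow> s - \<epsilon> < t \<longrightarrow> t \<le> s \<longrightarrow> orbit_liftable \<sigma> t \<longrightarrow> orbit_liftable \<sigma> (s + \<epsilon>)"
proof -
  have Q: "continuous_on UNIV (\<lambda>t. \<phi> t \<sigma>)" by (intro continuous_intros)
  obtain u where "\<psi> u (\<phi> s \<sigma>) \<in> S" using returns_forward by blast
  then have "\<psi> (- (- u)) (\<phi> s \<sigma>) \<in> S" by simp
  then obtain N c where N: "open N" "s \<in> N" and c: "time_lift \<psi> S (UNIV \<inter> N) (\<lambda>t. \<phi> t \<sigma>) c"
    by (rule local_time_lift[OF Q UNIV_I])
  obtain \<epsilon> where "0 < \<epsilon>" and ball: "ball s \<epsilon> \<subseteq> N" using openE[OF N] by blast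
  show ?thesis
  proof (intro exI[of _ "\<epsilon>/2"] conjI allI impI)
    show "0 < \<epsilon>/2" using \<open>0 < \<epsilon>\<close> by simp
    fix t1 assume t1: "0 \<le> t1" "s - \<epsilon>/2 < t1" "t1 \<le> s" "orbit_liftable \<sigma> t1"
    then obtain w1 where w1: "time_lift \<psi> S {0..t1} (\<lambda>t. \<phi> t \<sigma>) w1" "w1 0 = 0"
      unfolding orbit_liftable_def by blast
    define B where "B = {t1..s + \<epsilon>/2}"
    have "B \<subseteq> N" using ball t1(2) \<open>0 < \<epsilon>\<close> by (force simp: B_def dist_real_def)
    then have cB: "time_lift \<psi> S B (\<lambda>t. \<phi> t \<sigma>) c" using c by (auto elim: time_lift_subset)
    define Y where "Y t = \<psi> (- c t) (\<phi> t \<sigma>)" for t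
    have YS: "Y t \<in> S" if "t \<in> B" for t using cB that unfolding time_lift_def Y_def by blast
    have "t1 \<in> B" using t1 \<open>0 < \<epsilon>\<close> by (simp add: B_def)
    have "\<psi> (- w1 t1) (\<phi> t1 \<sigma>) \<in> S" using w1(1) t1(1) unfolding time_lift_def by simp
    then have "\<psi> (c t1 - w1 t1) (Y t1) \<in> S" by (simp add: Y_def)
    then obtain h where h: "continuous_on S h" "h (Y t1) = c t1 - w1 t1" "\<And>z. z \<in> S \<Longrightarrow> \<psi> (h z) z \<in> S"
      using hitting_time_extends_continuously[OF YS[OF \<open>t1 \<in> B\<close>]] by blast
    define w2 where "w2 t = c t - h (Y t)" for t
    have "time_lift \<psi> S B (\<lambda>t. \<phi> t \<sigma>) w2"
      unfolding time_lift_def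
    proof
      have "continuous_on B c" using cB by (simp add: time_lift_def)
      moreover have "continuous_on B (\<lambda>t. h (Y t))"
        using h(1) YS unfolding Y_def by (intro continuous_on_compose2[OF h(1)] continuous_intros \<open>continuous_on B c\<close>) auto
      ultimately show "continuous_on B w2" unfolding w2_def by (rule continuous_on_diff)
      show "\<forall>t\<in>B. \<psi> (- w2 t) (\<phi> t \<sigma>) \<in> S"
      proof
        fix t assume "t \<in> B"
        have "\<psi> (h (Y t)) (Y t) \<in> S" using h(3) YS[OF \<open>t \<in> B\<close>] .
        then show "\<psi> (- w2 t) (\<phi> t \<sigma>) \<in> S" by (simp add: w2_def Y_def)
      qed
    qed
    moreover have "w1 t1 = w2 t1" using h(2) by (simp add: w2_def)
    ultimately have "time_lift \<psi> S {0..s + \<epsilon>/2} (\<lambda>t. \<phi> t \<sigma>) (\<lambda>t. if t \<le> t1 then w1 t else w2 t)"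
      using time_lift_glue[OF w1(1)] unfolding B_def by blast
    then show "orbit_liftable \<sigma> (s + \<epsilon>/2)"
      unfolding orbit_liftable_def using w1(2) t1(1) by (intro exI[of _ "\<lambda>t. if t \<le> t1 then w1 t else w2 t"]) simp
  qed
qed

lemma orbit_liftable:
  assumes "\<sigma> \<in> S" "0 \<le> s"
  shows "orbit_liftable \<sigma> s"
proof (rule nonneg_continuation_induct[OF _ _ _ \<open>0 \<le> s\<close>])
  show "orbit_liftable \<sigma> 0"
    using \<open>\<sigma> \<in> S\<close> unfolding orbit_liftable_def time_lift_def by (intro exI[of _ "\<lambda>_. 0"]) auto
  show "orbit_liftable \<sigma> s'" if lift: "orbit_liftable \<sigma> t" and "0 \<le> s'" "s' \<le> t" for s' t
  proof -
    obtain w where w: "time_lift \<psi> S {0..t} (\<lambda>t. \<phi> t \<sigma>) w" "w 0 = 0"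
      using lift unfolding orbit_liftable_def by blast
    have "{0..s'} \<subseteq> {0..t}" using \<open>s' \<le> t\<close> by auto
    then show ?thesis
      unfolding orbit_liftable_def using time_lift_subset[OF w(1)] w(2) by blast
  qed
  show "\<exists>\<epsilon>>0. \<forall>t. 0 \<le> t \<longrightarrow> s' - \<epsilon> < t \<longrightarrow> t \<le> s' \<longrightarrow> orbit_liftable \<sigma> t \<longrightarrow> orbit_liftable \<sigma> (s' + \<epsilon>)" for s'
    by (rule orbit_liftable_extends[OF \<open>\<sigma> \<in> S\<close>])
qed

definition lift_time :: "'m \<Rightarrow> real \<Rightarrow> real" where
  "lift_time \<sigma> t = (SOME w. time_lift \<psi> S {0..t} (\<lambda>u. \<phi> u \<sigma>) w \<and> w 0 = 0) t"

lemma lift_time_eq: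
  assumes \<sigma>: "\<sigma> \<in> S" and w: "time_lift \<psi> S {0..s} (\<lambda>u. \<phi> u \<sigma>) w" "w 0 = 0" and "0 \<le> t" "t \<le> s"
  shows "lift_time \<sigma> t = w t"
proof -
  let ?P = "\<lambda>w. time_lift \<psi> S {0..t} (\<lambda>u. \<phi> u \<sigma>) w \<and> w 0 = 0"
  have "?P (SOME w. ?P w)"
    using orbit_liftable[OF \<sigma> \<open>0 \<le> t\<close>] unfolding orbit_liftable_def by (rule someI_ex)
  moreover have "time_lift \<psi> S {0..t} (\<lambda>u. \<phi> u \<sigma>) w"
    using w(1) by (rule time_lift_subset) (use \<open>t \<le> s\<close> in auto)
  moreover have "continuous_on {0..t} (\<lambda>u. \<phi> u \<sigma>)" by (intro continuous_intros)
  ultimately have "(SOME w. ?P w) t = w t"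
    using time_lift_unique[of "{0..t}" "\<lambda>u. \<phi> u \<sigma>" "SOME w. ?P w" w 0 t] w(2) \<open>0 \<le> t\<close> by simp
  then show ?thesis unfolding lift_time_def .
qed

lemma lift_time_zero:
  assumes "\<sigma> \<in> S"
  shows "lift_time \<sigma> 0 = 0"
proof -
  obtain w where w: "time_lift \<psi> S {0..0} (\<lambda>t. \<phi> t \<sigma>) w" "w 0 = 0"
    using orbit_liftable[OF assms order_refl] unfolding orbit_liftable_def by blast
  show ?thesis using lift_time_eq[OF assms w order_refl order_refl] w(2) by simp
qed

lemma time_lift_lift_time:
  assumes "\<sigma> \<in> S"
  shows "time_lift \<psi> S {0..} (\<lambda>t. \<phi> t \<sigma>) (lift_time \<sigma>)"
  unfolding time_lift_def
proof
  show "continuous_on {0..} (lift_time \<sigma>)"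
  proof (rule continuous_on_locally)
    fix s :: real assume "s \<in> {0..}"
    then obtain w where w: "time_lift \<psi> S {0..s + 1} (\<lambda>t. \<phi> t \<sigma>) w" "w 0 = 0"
      using orbit_liftable[OF assms, of "s + 1"] unfolding orbit_liftable_def by auto
    then have "continuous_on ({0..} \<inter> {..<s + 1}) w"
      unfolding time_lift_def by (auto elim: continuous_on_subset)
    then have "continuous_on ({0..} \<inter> {..<s + 1}) (lift_time \<sigma>)"
      by (rule continuous_on_eq) (use lift_time_eq[OF assms w] in auto)
    then show "\<exists>V. open V \<and> s \<in> V \<and> continuous_on ({0..} \<inter> V) (lift_time \<sigma>)"
      by (intro exI[of _ "{..<s + 1}"]) auto
  qed
  show "\<forall>t\<in>{0..}. \<psi> (- lift_time \<sigma> t) (\<phi> t \<sigma>) \<in> S"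
  proof
    fix t :: real assume "t \<in> {0..}"
    then obtain w where w: "time_lift \<psi> S {0..t} (\<lambda>t. \<phi> t \<sigma>) w" "w 0 = 0"
      using orbit_liftable[OF assms, of t] unfolding orbit_liftable_def by auto
    then show "\<psi> (- lift_time \<sigma> t) (\<phi> t \<sigma>) \<in> S"
      using lift_time_eq[OF assms w, of t] \<open>t \<in> {0..}\<close> unfolding time_lift_def by auto
  qed
qed

lemma lift_time_unique:
  assumes "\<sigma> \<in> S" "connected J" "J \<subseteq> {0..}" "time_lift \<psi> S J (\<lambda>t. \<phi> t \<sigma>) w"
    and "t0 \<in> J" "w t0 = lift_time \<sigma> t0" "t \<in> J"
  shows "w t = lift_time \<sigma> t"
proof -
  have "continuous_on J (\<lambda>t. \<phi> t \<sigma>)" by (intro continuous_intros)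
  moreover have "time_lift \<psi> S J (\<lambda>t. \<phi> t \<sigma>) (lift_time \<sigma>)"
    using time_lift_lift_time[OF assms(1)] assms(3) by (rule time_lift_subset)
  ultimately show ?thesis
    using time_lift_unique[of J "\<lambda>t. \<phi> t \<sigma>" w "lift_time \<sigma>" t0 t] assms(2,4-7) by blast
qed


lemma local_joint_time_lift:
  assumes "\<sigma>0 \<in> S" "0 \<le> s"
  obtains A \<epsilon> c where "open A" "\<sigma>0 \<in> A" "0 < \<epsilon>"
    "time_lift \<psi> S (A \<times> ({0..} \<inter> ball s \<epsilon>)) (\<lambda>p. \<phi> (snd p) (fst p)) c"
    "c (\<sigma>0, s) = lift_time \<sigma>0 s"
proof -
  have Q: "continuous_on UNIV (\<lambda>p::'m \<times> real. \<phi> (snd p) (fst p))" by (intro continuous_intros)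
  have "\<psi> (- lift_time \<sigma>0 s) (\<phi> (snd (\<sigma>0, s)) (fst (\<sigma>0, s))) \<in> S"
    using time_lift_lift_time[OF assms(1)] assms(2) unfolding time_lift_def by simp
  then obtain N c where N: "open N" "(\<sigma>0, s) \<in> N"
    and c: "time_lift \<psi> S (UNIV \<inter> N) (\<lambda>p. \<phi> (snd p) (fst p)) c" "c (\<sigma>0, s) = lift_time \<sigma>0 s"
    by (rule local_time_lift[OF Q UNIV_I])
  obtain A B where AB: "open A" "open B" "(\<sigma>0, s) \<in> A \<times> B" "A \<times> B \<subseteq> N"
    using open_prod_elim[OF N] by metis
  obtain \<epsilon> where "0 < \<epsilon>" "ball s \<epsilon> \<subseteq> B" using openE[OF AB(2)] AB(3) by auto
  then have sub: "A \<times> ({0..} \<inter> ball s \<epsilon>) \<subseteq> UNIV \<inter> N" using AB(4) by blast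
  show thesis
  proof (rule that)
    show "open A" "\<sigma>0 \<in> A" "0 < \<epsilon>" using AB(1,3) \<open>0 < \<epsilon>\<close> by auto
    show "time_lift \<psi> S (A \<times> ({0..} \<inter> ball s \<epsilon>)) (\<lambda>p. \<phi> (snd p) (fst p)) c"
      using c(1) sub by (rule time_lift_subset)
    show "c (\<sigma>0, s) = lift_time \<sigma>0 s" by (rule c(2))
  qed
qed

lemma joint_time_lift_eq_lift_time:
  assumes "\<sigma> \<in> S" "\<sigma> \<in> A" and c: "time_lift \<psi> S (A \<times> J) (\<lambda>p. \<phi> (snd p) (fst p)) c"
    and "connected J" "J \<subseteq> {0..}" "t0 \<in> J" "c (\<sigma>, t0) = lift_time \<sigma> t0" "t \<in> J"
  shows "c (\<sigma>, t) = lift_time \<sigma> t"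
proof (rule lift_time_unique[of \<sigma> J "\<lambda>t. c (\<sigma>, t)" t0 t, OF assms(1,4,5) _ assms(6-8)])
  have "continuous_on (A \<times> J) c" using c unfolding time_lift_def by blast
  moreover have "continuous_on J (\<lambda>t. (\<sigma>, t))" by (intro continuous_intros)
  ultimately have "continuous_on J (\<lambda>t. c (\<sigma>, t))"
    by (rule continuous_on_compose2) (use \<open>\<sigma> \<in> A\<close> in auto)
  then show "time_lift \<psi> S J (\<lambda>t. \<phi> t \<sigma>) (\<lambda>t. c (\<sigma>, t))"
    using c \<open>\<sigma> \<in> A\<close> unfolding time_lift_def by auto
qed

definition lift_time_continuous_near :: "'m \<Rightarrow> real \<Rightarrow> bool" where
  "lift_time_continuous_near \<sigma>0 s \<longleftrightarrow>
     (\<exists>N. open N \<and> \<sigma>0 \<in> N \<and> continuous_on ((S \<inter> N) \<times> {0..s}) (\<lambda>(\<sigma>, t). lift_time \<sigma> t))"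

lemma joint_time_lift_agrees_near:
  assumes c: "time_lift \<psi> S (A \<times> J) (\<lambda>p. \<phi> (snd p) (fst p)) c" and "t1 \<in> J" "0 \<le> t1"
    and L: "continuous_on D (\<lambda>\<sigma>. lift_time \<sigma> t1)" and "D \<subseteq> S \<inter> A"
    and "\<sigma>0 \<in> D" "c (\<sigma>0, t1) = lift_time \<sigma>0 t1"
  obtains N where "open N" "\<sigma>0 \<in> N" "\<And>\<sigma>. \<sigma> \<in> D \<inter> N \<Longrightarrow> c (\<sigma>, t1) = lift_time \<sigma> t1"
proof -
  have "continuous_on (A \<times> J) c" using c unfolding time_lift_def by blast
  moreover have "continuous_on D (\<lambda>\<sigma>. (\<sigma>, t1))" by (intro continuous_intros)
  ultimately have "continuous_on D (\<lambda>\<sigma>. c (\<sigma>, t1))"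
    by (rule continuous_on_compose2) (use \<open>D \<subseteq> S \<inter> A\<close> \<open>t1 \<in> J\<close> in auto)
  then have "time_lift \<psi> S D (\<lambda>\<sigma>. \<phi> t1 \<sigma>) (\<lambda>\<sigma>. c (\<sigma>, t1))"
    using c \<open>D \<subseteq> S \<inter> A\<close> \<open>t1 \<in> J\<close> unfolding time_lift_def by auto
  moreover have "time_lift \<psi> S D (\<lambda>\<sigma>. \<phi> t1 \<sigma>) (\<lambda>\<sigma>. lift_time \<sigma> t1)"
    using L time_lift_lift_time \<open>D \<subseteq> S \<inter> A\<close> \<open>0 \<le> t1\<close> unfolding time_lift_def by auto
  moreover have "continuous_on D (\<lambda>\<sigma>. \<phi> t1 \<sigma>)" by (intro continuous_intros)
  ultimately show thesis
    using time_lifts_agree_locally that assms(6,7) by blast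
qed

lemma lift_time_continuous_near_extends:
  assumes "\<sigma>0 \<in> S" "0 \<le> s"
  shows "\<exists>\<epsilon>>0. \<forall>t. 0 \<le> t \<longrightarrow> s - \<epsilon> < t \<longrightarrow> t \<le> s \<longrightarrow>
           lift_time_continuous_near \<sigma>0 t \<longrightarrow> lift_time_continuous_near \<sigma>0 (s + \<epsilon>)"
proof -
  obtain A \<epsilon> c where A: "open A" "\<sigma>0 \<in> A" and "0 < \<epsilon>"
    and c: "time_lift \<psi> S (A \<times> ({0..} \<inter> ball s \<epsilon>)) (\<lambda>p. \<phi> (snd p) (fst p)) c"
    and c0: "c (\<sigma>0, s) = lift_time \<sigma>0 s"
    by (rule local_joint_time_lift[OF assms])
  define J where "J = {0..} \<inter> ball s \<epsilon>"
  have J: "connected J" "J \<subseteq> {0..}" "s \<in> J"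
    unfolding J_def using assms(2) \<open>0 < \<epsilon>\<close> by (auto intro!: convex_connected convex_Int)
  have c_eq: "c (\<sigma>, t) = lift_time \<sigma> t"
    if "\<sigma> \<in> S" "\<sigma> \<in> A" "t0 \<in> J" "c (\<sigma>, t0) = lift_time \<sigma> t0" "t \<in> J" for \<sigma> t0 t
    using joint_time_lift_eq_lift_time[OF that(1,2) c[folded J_def] J(1,2) that(3-5)] .
  show ?thesis
  proof (intro exI[of _ "\<epsilon>/2"] conjI allI impI)
    show "0 < \<epsilon>/2" using \<open>0 < \<epsilon>\<close> by simp
    fix t1 assume t1: "0 \<le> t1" "s - \<epsilon>/2 < t1" "t1 \<le> s" "lift_time_continuous_near \<sigma>0 t1"
    then obtain N1 where N1: "open N1" "\<sigma>0 \<in> N1"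
      and L1: "continuous_on ((S \<inter> N1) \<times> {0..t1}) (\<lambda>(\<sigma>, t). lift_time \<sigma> t)"
      unfolding lift_time_continuous_near_def by blast
    have "t1 \<in> J" using t1 \<open>0 < \<epsilon>\<close> by (simp add: J_def dist_real_def)
    have "continuous_on (S \<inter> N1 \<inter> A) (\<lambda>\<sigma>. (\<sigma>, t1))" by (intro continuous_intros)
    moreover have "(\<lambda>\<sigma>. (\<sigma>, t1)) ` (S \<inter> N1 \<inter> A) \<subseteq> (S \<inter> N1) \<times> {0..t1}" using t1(1) by auto
    ultimately have "continuous_on (S \<inter> N1 \<inter> A) (\<lambda>\<sigma>. (\<lambda>(\<sigma>, t). lift_time \<sigma> t) (\<sigma>, t1))"
      by (rule continuous_on_compose2[OF L1])
    then have "continuous_on (S \<inter> N1 \<inter> A) (\<lambda>\<sigma>. lift_time \<sigma> t1)" by simp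
    moreover have "c (\<sigma>0, t1) = lift_time \<sigma>0 t1"
      using c_eq[OF \<open>\<sigma>0 \<in> S\<close> A(2) J(3) c0 \<open>t1 \<in> J\<close>] .
    ultimately obtain N2 where N2: "open N2" "\<sigma>0 \<in> N2"
      "\<And>\<sigma>. \<sigma> \<in> S \<inter> N1 \<inter> A \<inter> N2 \<Longrightarrow> c (\<sigma>, t1) = lift_time \<sigma> t1"
      using joint_time_lift_agrees_near[OF c[folded J_def] \<open>t1 \<in> J\<close> t1(1)] \<open>\<sigma>0 \<in> S\<close> N1(2) A(2) by blast
    define N where "N = N1 \<inter> A \<inter> N2"
    have "continuous_on ((S \<inter> N) \<times> {0..t1}) (\<lambda>(\<sigma>, t). lift_time \<sigma> t)"
      using L1 by (rule continuous_on_subset) (auto simp: N_def)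
    moreover have "continuous_on ((S \<inter> N) \<times> {t1..s + \<epsilon>/2}) (\<lambda>(\<sigma>, t). lift_time \<sigma> t)"
    proof (rule continuous_on_eq)
      have "(S \<inter> N) \<times> {t1..s + \<epsilon>/2} \<subseteq> A \<times> J"
        using t1 \<open>0 < \<epsilon>\<close> by (auto simp: N_def J_def dist_real_def)
      then show "continuous_on ((S \<inter> N) \<times> {t1..s + \<epsilon>/2}) c"
        using c[folded J_def] unfolding time_lift_def by (blast intro: continuous_on_subset)
      show "c p = (\<lambda>(\<sigma>, t). lift_time \<sigma> t) p" if "p \<in> (S \<inter> N) \<times> {t1..s + \<epsilon>/2}" for p
        using that c_eq[OF _ _ \<open>t1 \<in> J\<close> N2(3)] t1 \<open>0 < \<epsilon>\<close>
        by (auto simp: N_def J_def dist_real_def)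
    qed
    ultimately have "continuous_on ((S \<inter> N) \<times> {0..s + \<epsilon>/2}) (\<lambda>(\<sigma>, t). lift_time \<sigma> t)"
      by (rule continuous_on_Times_interval_glue)
    then show "lift_time_continuous_near \<sigma>0 (s + \<epsilon>/2)"
      unfolding lift_time_continuous_near_def using N1 A N2 by (intro exI[of _ N]) (auto simp: N_def)
  qed
qed


lemma lift_time_continuous_near:
  assumes "\<sigma>0 \<in> S" "0 \<le> s"
  shows "lift_time_continuous_near \<sigma>0 s"
proof (rule nonneg_continuation_induct[OF _ _ _ assms(2)])
  have "continuous_on (S \<times> {0..0}) (\<lambda>(\<sigma>, t). lift_time \<sigma> t)"
    by (rule continuous_on_eq[OF continuous_on_const[of _ 0]]) (auto simp: lift_time_zero)
  then show "lift_time_continuous_near \<sigma>0 0"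
    unfolding lift_time_continuous_near_def by (intro exI[of _ UNIV]) simp
  show "lift_time_continuous_near \<sigma>0 s'"
    if near: "lift_time_continuous_near \<sigma>0 t" and "0 \<le> s'" "s' \<le> t" for s' t
  proof -
    obtain N where N: "open N" "\<sigma>0 \<in> N"
      and L: "continuous_on ((S \<inter> N) \<times> {0..t}) (\<lambda>(\<sigma>, t). lift_time \<sigma> t)"
      using near unfolding lift_time_continuous_near_def by blast
    have "(S \<inter> N) \<times> {0..s'} \<subseteq> (S \<inter> N) \<times> {0..t}" using \<open>s' \<le> t\<close> by auto
    then show ?thesis
      unfolding lift_time_continuous_near_def using N continuous_on_subset[OF L] by blast
  qed
  show "\<exists>\<epsilon>>0. \<forall>t. 0 \<le> t \<longrightarrow> s' - \<epsilon> < t \<longrightarrow> t \<le> s' \<longrightarrow>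
      lift_time_continuous_near \<sigma>0 t \<longrightarrow> lift_time_continuous_near \<sigma>0 (s' + \<epsilon>)" if "0 \<le> s'" for s'
    using assms(1) that by (rule lift_time_continuous_near_extends)
qed

lemma continuous_on_lift_time: "continuous_on (S \<times> {0..}) (\<lambda>(\<sigma>, t). lift_time \<sigma> t)"
proof (rule continuous_on_locally)
  fix p :: "'m \<times> real" assume "p \<in> S \<times> {0..}"
  then obtain \<sigma>0 and s :: real where p: "p = (\<sigma>0, s)" "\<sigma>0 \<in> S" "0 \<le> s" by auto
  then obtain N where N: "open N" "\<sigma>0 \<in> N"
    and L: "continuous_on ((S \<inter> N) \<times> {0..s + 1}) (\<lambda>(\<sigma>, t). lift_time \<sigma> t)"
    using lift_time_continuous_near[of \<sigma>0 "s + 1"] unfolding lift_time_continuous_near_def by force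
  show "\<exists>V. open V \<and> p \<in> V \<and> continuous_on (S \<times> {0..} \<inter> V) (\<lambda>(\<sigma>, t). lift_time \<sigma> t)"
  proof (intro exI[of _ "N \<times> {..<s + 1}"] conjI)
    show "open (N \<times> {..<s + 1})" using N(1) by (intro open_Times) auto
    show "p \<in> N \<times> {..<s + 1}" using p N(2) by simp
    show "continuous_on (S \<times> {0..} \<inter> N \<times> {..<s + 1}) (\<lambda>(\<sigma>, t). lift_time \<sigma> t)"
    proof (rule continuous_on_subset[OF L])
      show "S \<times> {0..} \<inter> N \<times> {..<s + 1} \<subseteq> (S \<inter> N) \<times> {0..s + 1}" by (auto simp: less_imp_le)
    qed
  qed
qed


definition section_time :: "'m \<Rightarrow> real \<Rightarrow> real" where
  "section_time \<sigma> t =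
     (if t \<le> 0 then commuting_flows.lift_time \<psi> S (\<lambda>t. \<phi> (- t)) \<sigma> (- t) else lift_time \<sigma> t)"

definition section_map :: "real \<Rightarrow> 'm \<Rightarrow> 'm" where
  "section_map t \<sigma> = \<psi> (- section_time \<sigma> t) (\<phi> t \<sigma>)"

lemma section_time_zero: "\<sigma> \<in> S \<Longrightarrow> section_time \<sigma> 0 = 0"
proof -
  interpret R: commuting_flows \<psi> S "\<lambda>t. \<phi> (- t)" by (rule reverse_commuting_flows)
  show "\<sigma> \<in> S \<Longrightarrow> section_time \<sigma> 0 = 0" by (simp add: section_time_def R.lift_time_zero)
qed

lemma section_map_mem:
  assumes "\<sigma> \<in> S"
  shows "section_map t \<sigma> \<in> S"
proof -
  interpret R: commuting_flows \<psi> S "\<lambda>t. \<phi> (- t)" by (rule reverse_commuting_flows)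
  show ?thesis
  proof (cases "t \<le> 0")
    case True
    then have "- t \<in> {0..}" by simp
    with R.time_lift_lift_time[OF assms] have "\<psi> (- R.lift_time \<sigma> (- t)) (\<phi> (- (- t)) \<sigma>) \<in> S"
      unfolding time_lift_def by blast
    then show ?thesis using True by (simp add: section_map_def section_time_def)
  next
    case False
    then show ?thesis
      using time_lift_lift_time[OF assms] unfolding time_lift_def section_map_def section_time_def by simp
  qed
qed

lemma continuous_on_section_time: "continuous_on (S \<times> UNIV) (\<lambda>(\<sigma>, t). section_time \<sigma> t)"
proof -
  interpret R: commuting_flows \<psi> S "\<lambda>t. \<phi> (- t)" by (rule reverse_commuting_flows)
  let ?neg = "{p \<in> S \<times> (UNIV :: real set). snd p \<le> 0}"
    and ?pos = "{p \<in> S \<times> (UNIV :: real set). 0 \<le> snd p}"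
  have "continuous_on ?neg (\<lambda>p. (fst p, - snd p))" by (intro continuous_intros)
  moreover have "(\<lambda>p. (fst p, - snd p)) ` ?neg \<subseteq> S \<times> {0..}" by auto
  ultimately have "continuous_on ?neg (\<lambda>p. (\<lambda>(\<sigma>, t). R.lift_time \<sigma> t) (fst p, - snd p))"
    by (rule continuous_on_compose2[OF R.continuous_on_lift_time])
  then have neg: "continuous_on ?neg (\<lambda>p. R.lift_time (fst p) (- snd p))" by simp
  have "continuous_on ?pos (\<lambda>(\<sigma>, t). lift_time \<sigma> t)"
    by (rule continuous_on_subset[OF continuous_on_lift_time]) auto
  then have pos: "continuous_on ?pos (\<lambda>p. lift_time (fst p) (snd p))" by (simp add: case_prod_unfold)
  have "continuous_on (S \<times> UNIV)
      (\<lambda>p. if snd p \<le> 0 then R.lift_time (fst p) (- snd p) else lift_time (fst p) (snd p))"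
    by (rule continuous_on_cases_le[OF neg pos continuous_on_snd[OF continuous_on_id]])
       (auto simp: lift_time_zero R.lift_time_zero)
  then show ?thesis by (simp add: section_time_def case_prod_unfold)
qed

lemma time_lift_section_time:
  assumes "\<sigma> \<in> S"
  shows "time_lift \<psi> S UNIV (\<lambda>t. \<phi> t \<sigma>) (section_time \<sigma>)"
proof -
  have "continuous_on UNIV (\<lambda>t::real. (\<sigma>, t))" by (intro continuous_intros)
  moreover have "(\<lambda>t. (\<sigma>, t)) ` UNIV \<subseteq> S \<times> UNIV" using assms by auto
  ultimately have "continuous_on UNIV (\<lambda>t. (\<lambda>(\<sigma>, t). section_time \<sigma> t) (\<sigma>, t))"
    by (rule continuous_on_compose2[OF continuous_on_section_time])
  then show ?thesis
    using section_map_mem[OF assms] unfolding time_lift_def section_map_def by simp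
qed

lemma section_time_cocycle:
  assumes "\<sigma> \<in> S"
  shows "section_time \<sigma> (t + u) = section_time \<sigma> t + section_time (section_map t \<sigma>) u"
proof -
  define y where "y = section_map t \<sigma>"
  have "y \<in> S" unfolding y_def using section_map_mem[OF assms] .
  have shift: "\<psi> (- (section_time \<sigma> t + section_time y v)) (\<phi> (t + v) \<sigma>) = \<psi> (- section_time y v) (\<phi> v y)" for v
    by (simp add: y_def section_map_def flows_commute add.commute)
  have "time_lift \<psi> S UNIV (\<lambda>v. \<phi> (t + v) \<sigma>) (\<lambda>v. section_time \<sigma> (t + v))"
    using time_lift_compose[OF time_lift_section_time[OF assms], of UNIV "\<lambda>v. t + v"]
    by (simp add: continuous_intros)
  moreover have "time_lift \<psi> S UNIV (\<lambda>v. \<phi> (t + v) \<sigma>) (\<lambda>v. section_time \<sigma> t + section_time y v)"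
    using time_lift_section_time[OF \<open>y \<in> S\<close>] unfolding time_lift_def shift
    by (auto intro: continuous_intros)
  moreover have "continuous_on UNIV (\<lambda>v. \<phi> (t + v) \<sigma>)" by (intro continuous_intros)
  ultimately have "section_time \<sigma> (t + u) = section_time \<sigma> t + section_time y u"
    using time_lift_unique[of UNIV "\<lambda>v. \<phi> (t + v) \<sigma>" "\<lambda>v. section_time \<sigma> (t + v)"
        "\<lambda>v. section_time \<sigma> t + section_time y v" 0 u] section_time_zero[OF \<open>y \<in> S\<close>]
    by simp
  then show ?thesis by (simp add: y_def)
qed

lemma section_map_add:
  assumes "\<sigma> \<in> S"
  shows "section_map (t + u) \<sigma> = section_map u (section_map t \<sigma>)"
  by (simp add: section_map_def section_time_cocycle[OF assms] flows_commute add.commute)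

lemma continuous_on_section_map: "continuous_on (UNIV \<times> S) (\<lambda>(t, \<sigma>). section_map t \<sigma>)"
proof -
  have "continuous_on (UNIV \<times> S) (\<lambda>p. (snd p, fst p))" by (intro continuous_intros)
  moreover have "(\<lambda>p. (snd p, fst p)) ` (UNIV \<times> S) \<subseteq> S \<times> UNIV" by auto
  ultimately have "continuous_on (UNIV \<times> S) (\<lambda>p. (\<lambda>(\<sigma>, t). section_time \<sigma> t) (snd p, fst p))"
    by (rule continuous_on_compose2[OF continuous_on_section_time])
  then have "continuous_on (UNIV \<times> S) (\<lambda>p. \<psi> (- section_time (snd p) (fst p)) (\<phi> (fst p) (snd p)))"
    by (intro continuous_intros) simp
  then show ?thesis by (simp add: section_map_def case_prod_unfold)
qed

theorem commuting_flow_lift: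
  "\<exists>(k :: real \<Rightarrow> 'm \<Rightarrow> 'm) (\<omega> :: 'm \<Rightarrow> real \<Rightarrow> real).
     (\<forall>t. \<forall>\<sigma>\<in>S. k t \<sigma> \<in> S)
   \<and> continuous_on (UNIV \<times> S) (\<lambda>(t, \<sigma>). k t \<sigma>)
   \<and> continuous_on (S \<times> UNIV) (\<lambda>(\<sigma>, t). \<omega> \<sigma> t)
   \<and> (\<forall>t \<tau>. \<forall>\<sigma>\<in>S. \<psi> (\<tau> + \<omega> \<sigma> t) (k t \<sigma>) = \<phi> t (\<psi> \<tau> \<sigma>))
   \<and> (\<forall>\<sigma>\<in>S. k 0 \<sigma> = \<sigma> \<and> \<omega> \<sigma> 0 = 0)
   \<and> (\<forall>t s. \<forall>\<sigma>\<in>S. k (t + s) \<sigma> = k t (k s \<sigma>) \<and> \<omega> \<sigma> (t + s) = \<omega> \<sigma> t + \<omega> (k t \<sigma>) s)"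
proof (intro exI[of _ section_map] exI[of _ section_time] conjI allI ballI)
  fix \<sigma> t s \<tau> assume "\<sigma> \<in> S"
  show "section_map t \<sigma> \<in> S" using section_map_mem[OF \<open>\<sigma> \<in> S\<close>] .
  show "\<psi> (\<tau> + section_time \<sigma> t) (section_map t \<sigma>) = \<phi> t (\<psi> \<tau> \<sigma>)"
    by (simp add: section_map_def flows_commute)
  show "section_map 0 \<sigma> = \<sigma>" "section_time \<sigma> 0 = 0"
    by (simp_all add: section_map_def section_time_zero[OF \<open>\<sigma> \<in> S\<close>])
  show "section_map (t + s) \<sigma> = section_map t (section_map s \<sigma>)"
    using section_map_add[OF \<open>\<sigma> \<in> S\<close>, of s t] by (simp add: add.commute)
  show "section_time \<sigma> (t + s) = section_time \<sigma> t + section_time (section_map t \<sigma>) s"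
    by (rule section_time_cocycle[OF \<open>\<sigma> \<in> S\<close>])
qed (fact continuous_on_section_map continuous_on_section_time)+

end

lemma continuous_unique_zero:
  fixes g :: "real \<Rightarrow> 'a::topological_space \<Rightarrow> real"
  assumes "open X" "x0 \<in> X" "0 < \<delta>"
    and mono: "\<And>x a b. x \<in> X \<Longrightarrow> -\<delta> \<le> a \<Longrightarrow> a < b \<Longrightarrow> b \<le> \<delta> \<Longrightarrow> g a x < g b x"
    and cont_t: "\<And>x. x \<in> X \<Longrightarrow> continuous_on {-\<delta>..\<delta>} (\<lambda>t. g t x)"
    and cont_x: "\<And>t. t \<in> {-\<delta>..\<delta>} \<Longrightarrow> continuous_on X (g t)"
    and "g 0 x0 = 0"
  obtains W \<tau> where "open W" "x0 \<in> W" "W \<subseteq> X" "continuous_on W \<tau>"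
    "\<And>x. x \<in> W \<Longrightarrow> \<bar>\<tau> x\<bar> < \<delta> \<and> g (\<tau> x) x = 0 \<and> (\<forall>t. \<bar>t\<bar> < \<delta> \<longrightarrow> g t x = 0 \<longrightarrow> t = \<tau> x)"
proof -
  have open_level: "open (g t -` B \<inter> X)" if "t \<in> {-\<delta>..\<delta>}" "open B" for t B
    using continuous_on_open_vimage[OF \<open>open X\<close>] cont_x[OF that(1)] that(2) by blast
  define W where "W = (g (-\<delta>) -` {..<0} \<inter> X) \<inter> (g \<delta> -` {0<..} \<inter> X)"
  have "open W" unfolding W_def using \<open>0 < \<delta>\<close> by (intro open_Int[OF open_level open_level]) auto
  have "x0 \<in> W"
    using mono[OF \<open>x0 \<in> X\<close>, of "-\<delta>" 0] mono[OF \<open>x0 \<in> X\<close>, of 0 \<delta>] \<open>0 < \<delta>\<close> \<open>g 0 x0 = 0\<close> \<open>x0 \<in> X\<close>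
    by (simp add: W_def)
  have "W \<subseteq> X" by (auto simp: W_def)
  have zero: "\<exists>!t. -\<delta> < t \<and> t < \<delta> \<and> g t x = 0" if "x \<in> W" for x
  proof -
    have "x \<in> X" "g (-\<delta>) x < 0" "0 < g \<delta> x" using that by (auto simp: W_def)
    then have "\<exists>t\<ge>-\<delta>. t \<le> \<delta> \<and> g t x = 0"
      using \<open>0 < \<delta>\<close> by (intro IVT'[OF _ _ _ cont_t]) auto
    then obtain t where t: "-\<delta> \<le> t" "t \<le> \<delta>" "g t x = 0" by blast
    then have "-\<delta> < t" "t < \<delta>" using \<open>g (-\<delta>) x < 0\<close> \<open>0 < g \<delta> x\<close> by (auto simp: le_less)
    moreover have "t' = t" if "-\<delta> < t'" "t' < \<delta>" "g t' x = 0" for t'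
      using mono[OF \<open>x \<in> X\<close>, of t' t] mono[OF \<open>x \<in> X\<close>, of t t'] t that
      by (cases t' t rule: linorder_cases) auto
    ultimately show ?thesis using t(3) by blast
  qed
  define \<tau> where "\<tau> x = (THE t. -\<delta> < t \<and> t < \<delta> \<and> g t x = 0)" for x
  have \<tau>: "-\<delta> < \<tau> x" "\<tau> x < \<delta>" "g (\<tau> x) x = 0" if "x \<in> W" for x
    using theI'[OF zero[OF that]] by (simp_all add: \<tau>_def)
  have \<tau>_unique: "t = \<tau> x" if "x \<in> W" "-\<delta> < t" "t < \<delta>" "g t x = 0" for x t
    using the1_equality[OF zero[OF that(1)]] that by (simp add: \<tau>_def)
  have below: "g t x < 0 \<longleftrightarrow> t < \<tau> x" and above: "0 < g t x \<longleftrightarrow> \<tau> x < t"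
    if "x \<in> W" "t \<in> {-\<delta>..\<delta>}" for x t
  proof -
    have "x \<in> X" using that(1) by (simp add: W_def)
    then show "g t x < 0 \<longleftrightarrow> t < \<tau> x" "0 < g t x \<longleftrightarrow> \<tau> x < t"
      using mono[OF \<open>x \<in> X\<close>, of t "\<tau> x"] mono[OF \<open>x \<in> X\<close>, of "\<tau> x" t] \<tau>[OF that(1)] that(2)
      by (cases t "\<tau> x" rule: linorder_cases; force)+
  qed
  have lower: "eventually (\<lambda>y. a < \<tau> y) (at x within W)" if "x \<in> W" "a < \<tau> x" for x a
  proof (cases "a < -\<delta>")
    case True
    then show ?thesis
      unfolding eventually_at_topological using \<tau>(1) by (intro exI[of _ UNIV]) force
  next
    case False
    then have a: "a \<in> {-\<delta>..\<delta>}" using \<tau>(2)[OF \<open>x \<in> W\<close>] \<open>a < \<tau> x\<close> by simp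
    show ?thesis
      unfolding eventually_at_topological
      using open_level[OF a, of "{..<0}"] below[OF _ a] that \<open>W \<subseteq> X\<close> by (intro exI[of _ "g a -` {..<0} \<inter> X"]) auto
  qed
  have upper: "eventually (\<lambda>y. \<tau> y < b) (at x within W)" if "x \<in> W" "\<tau> x < b" for x b
  proof (cases "\<delta> < b")
    case True
    then show ?thesis
      unfolding eventually_at_topological using \<tau>(2) by (intro exI[of _ UNIV]) force
  next
    case False
    then have b: "b \<in> {-\<delta>..\<delta>}" using \<tau>(1)[OF \<open>x \<in> W\<close>] \<open>\<tau> x < b\<close> by simp
    show ?thesis
      unfolding eventually_at_topological
      using open_level[OF b, of "{0<..}"] above[OF _ b] that \<open>W \<subseteq> X\<close> by (intro exI[of _ "g b -` {0<..} \<inter> X"]) auto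
  qed
  show thesis
  proof (rule that[OF \<open>open W\<close> \<open>x0 \<in> W\<close> \<open>W \<subseteq> X\<close>])
    show "continuous_on W \<tau>"
      unfolding continuous_on_def by (intro ballI order_tendstoI lower upper)
    show "\<bar>\<tau> x\<bar> < \<delta> \<and> g (\<tau> x) x = 0 \<and> (\<forall>t. \<bar>t\<bar> < \<delta> \<longrightarrow> g t x = 0 \<longrightarrow> t = \<tau> x)"
      if "x \<in> W" for x
    proof (intro conjI allI impI)
      show "\<bar>\<tau> x\<bar> < \<delta>" using \<tau>(1,2)[OF that] by (simp add: abs_less_iff)
      show "g (\<tau> x) x = 0" by (rule \<tau>(3)[OF that])
      fix t assume "\<bar>t\<bar> < \<delta>" "g t x = 0"
      then show "t = \<tau> x" by (intro \<tau>_unique[OF that]) (simp_all add: abs_less_iff)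
    qed
  qed
qed

lemma positive_near_zero_time:
  fixes q :: "real \<times> 'a::topological_space \<Rightarrow> real"
  assumes "open N" "(0, x0) \<in> N" "continuous_on N q" "0 < q (0, x0)"
  obtains X \<delta> where "open X" "x0 \<in> X" "0 < \<delta>" "\<And>t x. \<bar>t\<bar> \<le> \<delta> \<Longrightarrow> x \<in> X \<Longrightarrow> (t, x) \<in> N \<and> 0 < q (t, x)"
proof -
  obtain P where P: "open P" "(0, x0) \<in> P" "\<forall>p\<in>N. p \<in> P \<longrightarrow> q p \<in> {0<..}"
    using continuous_on_topological[THEN iffD1, rule_format, OF assms(3,2) open_greaterThan[of 0]] assms(4)
    by auto
  obtain T X where TX: "open T" "open X" "(0, x0) \<in> T \<times> X" "T \<times> X \<subseteq> N \<inter> P"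
    using open_prod_elim[OF open_Int[OF assms(1) P(1)]] assms(2) P(2) by blast
  obtain \<epsilon> where "0 < \<epsilon>" "ball 0 \<epsilon> \<subseteq> T" using openE[OF TX(1)] TX(3) by auto
  show thesis
  proof (rule that[OF TX(2) _ half_gt_zero[OF \<open>0 < \<epsilon>\<close>]])
    show "x0 \<in> X" using TX(3) by simp
    fix t x assume "\<bar>t\<bar> \<le> \<epsilon> / 2" "x \<in> X"
    then have "(t, x) \<in> T \<times> X" using \<open>0 < \<epsilon>\<close> \<open>ball 0 \<epsilon> \<subseteq> T\<close> by auto
    then show "(t, x) \<in> N \<and> 0 < q (t, x)" using TX(4) P(3) by auto
  qed
qed

lemma C1_flow_continuous_flow:
  assumes "C1_flow A \<psi>"
  shows "continuous_flow \<psi>"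
proof
  note flow = assms[unfolded C1_flow_def]
  show "\<psi> 0 x = x" for x using conjunct1[OF flow] by simp
  show "\<psi> (s + t) x = \<psi> s (\<psi> t x)" for s t x using conjunct1[OF conjunct2[OF flow]] by simp
  show "continuous_on UNIV (\<lambda>(t, x). \<psi> t x)" using conjunct1[OF conjunct2[OF conjunct2[OF flow]]] .
qed

lemma manifold_relatively_closed_imp_closed:
  fixes A :: "('m::topological_space set \<times> ('m \<Rightarrow> real^'n)) set" and \<Sigma> :: "'m set"
  assumes "manifold A" "relatively_closed \<Sigma>"
  shows "closed \<Sigma>"
proof -
  obtain B :: "'m set set" where "countable B" "\<And>b. b \<in> B \<Longrightarrow> open b" "\<And>U. open U \<Longrightarrow> \<exists>B'\<subseteq>B. U = \<Union>B'"
    using conjunct2[OF conjunct2[OF assms(1)[unfolded manifold_def]]] by blast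
  then show ?thesis
    by (rule sequentially_closed_imp_closed) (use assms(2) in \<open>auto simp: relatively_closed_def\<close>)
qed

lemma chart_in_atlas:
  assumes "manifold A"
  obtains V k where "(V, k) \<in> A" "x \<in> V" "chart V k"
proof -
  have "x \<in> \<Union>(fst ` A)" using assms unfolding manifold_def C1_atlas_def by auto
  then obtain V k where "(V, k) \<in> A" "x \<in> V" by auto
  moreover have "chart V k"
    using assms \<open>(V, k) \<in> A\<close> unfolding manifold_def C1_atlas_def compatible_chart_def by auto
  ultimately show thesis by (rule that)
qed

lemma has_vector_derivative_vec_nth:
  fixes f :: "real \<Rightarrow> real^'n"
  assumes "(f has_vector_derivative f') (at s)"
  shows "((\<lambda>t. f t $ i) has_real_derivative f' $ i) (at s)"
proof -
  have "((\<lambda>t. f t $ i) has_derivative (\<lambda>d. (d *\<^sub>R f') $ i)) (at s)"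
    using assms unfolding has_vector_derivative_def by (rule bounded_linear.has_derivative[OF bounded_linear_vec_nth])
  moreover have "(\<lambda>d. (d *\<^sub>R f') $ i) = (*) (f' $ i)" by (auto simp: fun_eq_iff)
  ultimately show ?thesis by (simp add: has_field_derivative_def)
qed

lemma chart_inj_on: "chart U h \<Longrightarrow> inj_on h U"
  unfolding chart_def by (meson homeomorphism_apply1 inj_on_inverseI)

lemma slice_chart_mem_iff:
  assumes "chart U h" and slice: "h ` (U \<inter> \<Sigma>) = h ` U \<inter> {y. y $ i = 0}" and "y \<in> U"
  shows "y \<in> \<Sigma> \<longleftrightarrow> h y $ i = 0"
proof
  assume "y \<in> \<Sigma>"
  then have "h y \<in> h ` (U \<inter> \<Sigma>)" using \<open>y \<in> U\<close> by blast
  then show "h y $ i = 0" unfolding slice by blast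
next
  assume "h y $ i = 0"
  then have "h y \<in> h ` (U \<inter> \<Sigma>)" unfolding slice using \<open>y \<in> U\<close> by blast
  then obtain z where z: "z \<in> U" "z \<in> \<Sigma>" "h y = h z" by blast
  then have "y = z" using chart_inj_on[OF assms(1)] \<open>y \<in> U\<close> by (blast dest: inj_onD)
  then show "y \<in> \<Sigma>" using z(2) by simp
qed

lemma chart_flow_has_vector_derivative:
  fixes A :: "('m::topological_space set \<times> ('m \<Rightarrow> real^'n)) set" and \<psi> :: "real \<Rightarrow> 'm \<Rightarrow> 'm"
  assumes M: "manifold A" and F: "C1_flow A \<psi>" and U: "compatible_chart A U h" and "\<sigma>0 \<in> U"
  obtains N D where "open N" "(0, \<sigma>0) \<in> N" "continuous_on N D"
    "\<And>t x. (t, x) \<in> N \<Longrightarrow> \<psi> t x \<in> U \<and> ((\<lambda>s. h (\<psi> s x)) has_vector_derivative D (t, x)) (at t)"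
proof -
  interpret continuous_flow \<psi> using F by (rule C1_flow_continuous_flow)
  obtain V k where Vk: "(V, k) \<in> A" "\<sigma>0 \<in> V" and "chart V k" by (rule chart_in_atlas[OF M])
  have "chart U h" using U by (simp add: compatible_chart_def)
  define g where "g = inv_into V k"
  have gk: "g (k x) = x" if "x \<in> V" for x
    using \<open>chart V k\<close> that unfolding chart_def g_def by (blast intro: homeomorphism_apply1)
  have "C1_on (k ` (U \<inter> V)) (h \<circ> g)" using U Vk(1) unfolding compatible_chart_def g_def by auto
  then obtain G' where G': "\<forall>z\<in>k ` (U \<inter> V). ((h \<circ> g) has_derivative blinfun_apply (G' z)) (at z)"
    "continuous_on (k ` (U \<inter> V)) G'" unfolding C1_on_def by blast
  define F0 where "F0 = (\<lambda>(t, y). k (\<psi> t (g y)))"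
  define SF where "SF = {(t, k x) | t x. x \<in> V \<and> \<psi> t x \<in> V}"
  have "C1_on SF F0"
    using conjunct2[OF conjunct2[OF conjunct2[OF F[unfolded C1_flow_def]]]] Vk(1)
    unfolding SF_def F0_def g_def by fastforce
  then obtain F' where F': "\<forall>p\<in>SF. (F0 has_derivative blinfun_apply (F' p)) (at p)" "continuous_on SF F'"
    unfolding C1_on_def by blast
  define N where "N = {p. snd p \<in> V \<and> \<psi> (fst p) (snd p) \<in> U \<inter> V}"
  have "open N"
  proof -
    have "N = (UNIV \<times> V) \<inter> (\<lambda>p. \<psi> (fst p) (snd p)) -` (U \<inter> V)" unfolding N_def by auto
    moreover have "continuous_on UNIV (\<lambda>p::real \<times> 'm. \<psi> (fst p) (snd p))" by (intro continuous_intros)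
    moreover have "open U" "open V" using \<open>chart U h\<close> \<open>chart V k\<close> by (simp_all add: chart_def)
    ultimately show ?thesis by (auto intro!: open_Int open_Times open_vimage)
  qed
  have in_SF: "(t, k x) \<in> SF" "F0 (t, k x) = k (\<psi> t x)" "F0 (t, k x) \<in> k ` (U \<inter> V)"
    if "(t, x) \<in> N" for t x
    using that unfolding SF_def N_def F0_def by (auto simp: gk)
  define D where "D p = G' (F0 (fst p, k (snd p))) (F' (fst p, k (snd p)) (1, 0))" for p
  have der: "((\<lambda>s. h (\<psi> s x)) has_vector_derivative D (t, x)) (at t)" if tx: "(t, x) \<in> N" for t x
  proof -
    have "((\<lambda>s. (s, k x)) has_derivative (\<lambda>d. (d, 0))) (at t)"
      by (rule has_derivative_Pair[OF has_derivative_ident has_derivative_const])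
    moreover have "(F0 has_derivative blinfun_apply (F' (t, k x))) (at (t, k x))" using F'(1) in_SF(1)[OF tx] by blast
    moreover have "((h \<circ> g) has_derivative blinfun_apply (G' (F0 (t, k x)))) (at (F0 (t, k x)))"
      using G'(1) in_SF(3)[OF tx] by blast
    ultimately have "((\<lambda>s. (h \<circ> g) (F0 (s, k x))) has_derivative
        (\<lambda>d. G' (F0 (t, k x)) (F' (t, k x) (d, 0)))) (at t)"
      using has_derivative_compose[OF has_derivative_compose] by fastforce
    moreover have "(\<lambda>d. G' (F0 (t, k x)) (F' (t, k x) (d, 0))) = (\<lambda>d. d *\<^sub>R D (t, x))"
      by (auto simp: D_def fun_eq_iff blinfun.scaleR_right simp flip: blinfun.scaleR_right)
    ultimately have deriv: "((\<lambda>s. (h \<circ> g) (F0 (s, k x))) has_vector_derivative D (t, x)) (at t)"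
      by (simp add: has_vector_derivative_def)
    have "open {s. (s, x) \<in> N}"
      using \<open>open N\<close> by (rule open_vimage[of N "\<lambda>s. (s, x)", simplified vimage_def]) (intro continuous_intros)
    moreover have "(h \<circ> g) (F0 (s, k x)) = h (\<psi> s x)" if "s \<in> {s. (s, x) \<in> N}" for s
      using that in_SF(2)[of s x] by (auto simp: N_def gk)
    ultimately show ?thesis
      using tx by (intro has_vector_derivative_transform_within_open[OF deriv]) auto
  qed
  have cont: "continuous_on N D"
  proof -
    define SF2 where "SF2 = {p \<in> SF. F0 p \<in> k ` (U \<inter> V)}"
    have "continuous_on SF2 F0"
    proof (rule continuous_at_imp_continuous_on, rule ballI)
      fix p assume "p \<in> SF2"
      then have "(F0 has_derivative blinfun_apply (F' p)) (at p)" using F'(1) by (simp add: SF2_def)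
      then show "isCont F0 p" by (rule has_derivative_continuous)
    qed
    then have "continuous_on SF2 (\<lambda>p. G' (F0 p))"
      by (rule continuous_on_compose2[OF G'(2)]) (auto simp: SF2_def)
    moreover have "continuous_on SF2 F'" using F'(2) by (rule continuous_on_subset) (auto simp: SF2_def)
    ultimately have \<Phi>: "continuous_on SF2 (\<lambda>p. G' (F0 p) (F' p (1, 0)))"
      by (intro bounded_bilinear.continuous_on[OF bounded_bilinear_blinfun_apply] continuous_on_const)
    have "continuous_on V k" using \<open>chart V k\<close> unfolding chart_def homeomorphism_def by blast
    moreover have "continuous_on N (\<lambda>p. snd p)" by (rule continuous_on_snd[OF continuous_on_id])
    ultimately have "continuous_on N (\<lambda>p. k (snd p))"
      by (rule continuous_on_compose2) (auto simp: N_def)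
    then have "continuous_on N (\<lambda>p. (fst p, k (snd p)))"
      by (intro continuous_on_Pair continuous_on_fst[OF continuous_on_id])
    moreover have "(\<lambda>p. (fst p, k (snd p))) ` N \<subseteq> SF2" using in_SF by (auto simp: SF2_def)
    ultimately show ?thesis unfolding D_def by (rule continuous_on_compose2[OF \<Phi>])
  qed
  have "(0, \<sigma>0) \<in> N" using \<open>\<sigma>0 \<in> U\<close> Vk(2) by (simp add: N_def)
  then show thesis
  proof (rule that[OF \<open>open N\<close> _ cont])
    fix t x assume "(t, x) \<in> N"
    then show "\<psi> t x \<in> U \<and> ((\<lambda>s. h (\<psi> s x)) has_vector_derivative D (t, x)) (at t)"
      using der[OF \<open>(t, x) \<in> N\<close>] unfolding N_def by simp
  qed
qed

lemma transverse_crossing_time: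
  fixes A :: "('m::topological_space set \<times> ('m \<Rightarrow> real^'n)) set" and \<psi> :: "real \<Rightarrow> 'm \<Rightarrow> 'm"
  assumes M: "manifold A" and F: "C1_flow A \<psi>" and "transverse_hypersurface A \<psi> \<Sigma>" "\<sigma>0 \<in> \<Sigma>"
  shows "\<exists>W \<delta> \<tau>. open W \<and> \<sigma>0 \<in> W \<and> crossing_time \<psi> \<Sigma> W \<delta> \<tau>"
proof -
  interpret continuous_flow \<psi> using F by (rule C1_flow_continuous_flow)
  obtain U h i v where U: "\<sigma>0 \<in> U" "compatible_chart A U h"
    and slice: "h ` (U \<inter> \<Sigma>) = h ` U \<inter> {y. y $ i = 0}"
    and v: "((\<lambda>t. h (\<psi> t \<sigma>0)) has_vector_derivative v) (at 0)" "v $ i \<noteq> 0"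
    using assms(3,4) unfolding transverse_hypersurface_def by blast
  have "chart U h" using U(2) by (simp add: compatible_chart_def)
  obtain N D where N: "open N" "(0, \<sigma>0) \<in> N" "continuous_on N D"
    and ND: "\<And>t x. (t, x) \<in> N \<Longrightarrow> \<psi> t x \<in> U \<and> ((\<lambda>s. h (\<psi> s x)) has_vector_derivative D (t, x)) (at t)"
    using chart_flow_has_vector_derivative[OF M F U(2,1)] by blast
  have "D (0, \<sigma>0) = v" using vector_derivative_unique_at[OF conjunct2[OF ND[OF N(2)]] v(1)] .
  define c where "c = sgn (v $ i)"
  define q where "q p = c * D p $ i" for p
  have "continuous_on N q"
    unfolding q_def by (intro continuous_intros bounded_linear.continuous_on[OF bounded_linear_vec_nth] N(3))
  moreover have "0 < q (0, \<sigma>0)"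
    using \<open>D (0, \<sigma>0) = v\<close> v(2) by (cases "0 < v $ i") (auto simp: q_def c_def sgn_if)
  ultimately obtain X \<delta> where X: "open X" "\<sigma>0 \<in> X" "0 < \<delta>"
    and box: "\<And>t x. \<bar>t\<bar> \<le> \<delta> \<Longrightarrow> x \<in> X \<Longrightarrow> (t, x) \<in> N \<and> 0 < q (t, x)"
    using positive_near_zero_time[OF N(1,2)] by blast
  define g where "g t x = c * h (\<psi> t x) $ i" for t x
  have deriv: "((\<lambda>t. g t x) has_real_derivative q (t, x)) (at t)" if "\<bar>t\<bar> \<le> \<delta>" "x \<in> X" for t x
    using has_vector_derivative_vec_nth[OF conjunct2[OF ND[OF conjunct1[OF box[OF that]]]]]
    unfolding g_def q_def by (rule DERIV_cmult)
  have hit_iff: "\<psi> t x \<in> \<Sigma> \<longleftrightarrow> g t x = 0" if "\<bar>t\<bar> \<le> \<delta>" "x \<in> X" for t x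
    using slice_chart_mem_iff[OF \<open>chart U h\<close> slice] ND box[OF that] v(2)
    by (simp add: g_def c_def sgn_if)
  have "continuous_on U h" using \<open>chart U h\<close> by (simp add: chart_def homeomorphism_def)
  obtain W \<tau> where W: "open W" "\<sigma>0 \<in> W" "W \<subseteq> X" "continuous_on W \<tau>"
    and zero: "\<And>x. x \<in> W \<Longrightarrow> \<bar>\<tau> x\<bar> < \<delta> \<and> g (\<tau> x) x = 0 \<and> (\<forall>t. \<bar>t\<bar> < \<delta> \<longrightarrow> g t x = 0 \<longrightarrow> t = \<tau> x)"
  proof (rule continuous_unique_zero[OF X])
    show "g a x < g b x" if "x \<in> X" "-\<delta> \<le> a" "a < b" "b \<le> \<delta>" for x a b
    proof (rule DERIV_pos_imp_increasing[OF \<open>a < b\<close>])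
      fix s assume "a \<le> s" "s \<le> b"
      then have "\<bar>s\<bar> \<le> \<delta>" using that by auto
      then show "\<exists>y. ((\<lambda>t. g t x) has_real_derivative y) (at s) \<and> 0 < y"
        using deriv box \<open>x \<in> X\<close> by blast
    qed
    show "continuous_on {-\<delta>..\<delta>} (\<lambda>t. g t x)" if "x \<in> X" for x
    proof (rule continuous_at_imp_continuous_on, rule ballI)
      fix t assume "t \<in> {-\<delta>..\<delta>}"
      then have "\<bar>t\<bar> \<le> \<delta>" by auto
      then show "isCont (\<lambda>t. g t x) t" by (rule DERIV_isCont[OF deriv[OF _ that]])
    qed
    show "continuous_on X (g t)" if "t \<in> {-\<delta>..\<delta>}" for t
    proof -
      have "continuous_on X (\<lambda>x. \<psi> t x)" by (intro continuous_intros)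
      moreover have "(\<lambda>x. \<psi> t x) ` X \<subseteq> U" using box ND that by force
      ultimately have "continuous_on X (\<lambda>x. h (\<psi> t x))"
        by (rule continuous_on_compose2[OF \<open>continuous_on U h\<close>])
      then show ?thesis
        unfolding g_def by (intro continuous_on_mult continuous_on_const bounded_linear.continuous_on[OF bounded_linear_vec_nth])
    qed
    show "g 0 \<sigma>0 = 0" using hit_iff[of 0 \<sigma>0] \<open>\<sigma>0 \<in> \<Sigma>\<close> X(2) \<open>0 < \<delta>\<close> by simp
  qed blast
  have "crossing_time \<psi> \<Sigma> W \<delta> \<tau>"
    unfolding crossing_time_def
  proof (intro conjI ballI allI impI)
    show "0 < \<delta>" "continuous_on W \<tau>" by fact+
    fix x assume "x \<in> W"
    then have "x \<in> X" using W(3) by blast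
    show "\<bar>\<tau> x\<bar> < \<delta>" using zero[OF \<open>x \<in> W\<close>] by blast
    then show "\<psi> (\<tau> x) x \<in> \<Sigma>" using hit_iff[OF _ \<open>x \<in> X\<close>] zero[OF \<open>x \<in> W\<close>] by simp
    fix t assume "\<bar>t\<bar> < \<delta>" "\<psi> t x \<in> \<Sigma>"
    then show "t = \<tau> x" using hit_iff[OF _ \<open>x \<in> X\<close>, of t] zero[OF \<open>x \<in> W\<close>] by simp
  qed
  then show ?thesis using W(1,2) by blast
qed

lemma global_poincare_section_flow_section:
  fixes A :: "('m::topological_space set \<times> ('m \<Rightarrow> real^'n)) set"
  assumes M: "manifold A" and F: "C1_flow A \<psi>" and P: "global_poincare_section A \<psi> \<Sigma>"
  shows "flow_section \<psi> \<Sigma>"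
proof (intro flow_section.intro C1_flow_continuous_flow[OF F] flow_section_axioms.intro)
  show "closed \<Sigma>"
    using manifold_relatively_closed_imp_closed[OF M] P by (simp add: global_poincare_section_def)
  show "\<exists>W \<delta> \<tau>. open W \<and> \<sigma> \<in> W \<and> crossing_time \<psi> \<Sigma> W \<delta> \<tau>" if "\<sigma> \<in> \<Sigma>" for \<sigma>
    using transverse_crossing_time[OF M F _ that] P by (simp add: global_poincare_section_def)
  show "\<exists>t>0. \<psi> t x \<in> \<Sigma>" "\<exists>t<0. \<psi> t x \<in> \<Sigma>" for x
    using P by (simp_all add: global_poincare_section_def)
qed

theorem corollary2p5:
  fixes A :: "('m::topological_space set \<times> ('m \<Rightarrow> real^'n)) set"
    and \<psi> \<phi> :: "real \<Rightarrow> 'm \<Rightarrow> 'm"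
    and \<Sigma> :: "'m set"
  assumes "manifold A"
    and "path_connected (UNIV :: 'm set)"
    and "C1_flow A \<psi>" and "C1_flow A \<phi>"
    and "\<And>s t. \<psi> s \<circ> \<phi> t = \<phi> t \<circ> \<psi> s"
    and "global_poincare_section A \<psi> \<Sigma>"
  shows "\<exists>(k :: real \<Rightarrow> 'm \<Rightarrow> 'm) (\<omega> :: 'm \<Rightarrow> real \<Rightarrow> real).
           (\<forall>t. \<forall>\<sigma>\<in>\<Sigma>. k t \<sigma> \<in> \<Sigma>)
         \<and> continuous_on (UNIV \<times> \<Sigma>) (\<lambda>(t,\<sigma>). k t \<sigma>)
         \<and> continuous_on (\<Sigma> \<times> UNIV) (\<lambda>(\<sigma>,t). \<omega> \<sigma> t)
         \<and> (\<forall>t \<tau>. \<forall>\<sigma>\<in>\<Sigma>. \<psi> (\<tau> + \<omega> \<sigma> t) (k t \<sigma>) = \<phi> t (\<psi> \<tau> \<sigma>))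
         \<and> (\<forall>\<sigma>\<in>\<Sigma>. k 0 \<sigma> = \<sigma> \<and> \<omega> \<sigma> 0 = 0)
         \<and> (\<forall>t s. \<forall>\<sigma>\<in>\<Sigma>. k (t + s) \<sigma> = k t (k s \<sigma>)
                         \<and> \<omega> \<sigma> (t + s) = \<omega> \<sigma> t + \<omega> (k t \<sigma>) s)"
proof -
  have "commuting_flows \<psi> \<Sigma> \<phi>"
  proof (intro commuting_flows.intro commuting_flows_axioms.intro)
    show "flow_section \<psi> \<Sigma>" using assms(1,3,6) by (rule global_poincare_section_flow_section)
    show "continuous_flow \<phi>" using assms(4) by (rule C1_flow_continuous_flow)
    show "\<psi> s (\<phi> t x) = \<phi> t (\<psi> s x)" for s t x using fun_cong[OF assms(5)[of s t], of x] by simp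
  qed
  then show ?thesis by (rule commuting_flows.commuting_flow_lift)
qed

end
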